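(* Suppose that $2$ is invertible in $T$. Then for every sequence ${\mathbf s}$ in $\widehat{\mathcal S}$, $${\mathcal Y}_T({\mathbf s})=\Big\{(z_\sigma)\in\bigoplus_{\sigma\in I({\mathbf s})}Q_T\ \Big|\ \textstyle\sum_\sigma z_\sigma m_\sigma\in S_T\text{ for all }(m_\sigma)\in{\mathcal X}_T({\mathbf s})\Big\}.$$ Consequently ${\mathcal Y}_T({\mathbf s})$ is identified with the graded dual $\bigoplus_n\operatorname{Hom}_{S_T}({\mathcal X}_T({\mathbf s}),S_T\{n\})$ via the pairing $((x_\sigma),(y_\sigma))\mapsto\sum_\sigma x_\sigma y_\sigma$.
   Context: $R$ irreducible reduced finite root system (positive roots $R^+$, simple roots $\Pi$, highest root $\gamma$); $\widehat X=X\oplus\mathbb Z$, $\delta=(0,-1)$, affine roots $\widehat R=\{\alpha+n\delta\}$. $\widehat{\mathcal W}$ generated by $s_{\alpha,n}(v,m)=(v-(\langle\alpha,v\rangle-mn)\alpha^\vee,m)$, acting contragrediently on $\widehat X$; $\widehat{\mathcal S}=\{s_{\alpha,0}:\alpha\in\Pi\}\cup\{s_{\gamma,1}\}$ with simple affine roots $\alpha$ resp. $-\gamma+\delta$. $T$: commutative unital domain, affine roots nonzero in $\widehat X\otimes T$; $S_T$ symmetric algebra of $\widehat X\otimes T$ graded in even degrees, $M\{n\}_k=M_{n+k}$; $Q_T=S_T[2^{-1}][\alpha^{-1}:\alpha\in\widehat R]$. For ${\mathbf s}=(s_1,\dots,s_l)$: $I({\mathbf s})$ = strictly increasing tuples in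 $\{1,\dots,l\}$, $\operatorname{ev}(i_1,\dots,i_n)=s_{i_1}\cdots s_{i_n}$; ${\mathbf s}'=(s_1,\dots,s_{l-1})$, $I({\mathbf s})=I({\mathbf s}')\sqcup I({\mathbf s}')s_l$; $\Delta(z)_\gamma=\Delta(z)_{\gamma s_l}=z_\gamma$; $c^\lambda$ multiplies the $\sigma$-component by $\operatorname{ev}(\sigma)(\lambda)\otimes1$; $\alpha_l$ the simple affine root of $s_l$. ${\mathcal X}_T(\emptyset)=S_T$, ${\mathcal X}_T({\mathbf s})=\Delta({\mathcal X}_T({\mathbf s}'))+c^{\alpha_l}\Delta({\mathcal X}_T({\mathbf s}'))\subset\bigoplus_{I({\mathbf s})}S_T$; ${\mathcal Y}_T(\emptyset)=S_T\subset Q_T$, ${\mathcal Y}_T({\mathbf s})=\Delta({\mathcal Y}_T({\mathbf s}'))+(c^{\alpha_l})^{-1}\Delta({\mathcal Y}_T({\mathbf s}'))\subset\bigoplus_{I({\mathbf s})}Q_T$. *)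

theory Defs
  imports "HOL-Analysis.Finite_Cartesian_Product" "HOL-Library.Poly_Mapping"
    "HOL-Library.Option_ord" "HOL-Computational_Algebra.Fraction_Field"
begin

text \<open>The lattice X is Z^n, realised as int^'n; its dual lattice is identified with int^'n
  via the standard pairing.  Coroots are given by a map cor.\<close>

definition pair :: "(int, 'n::finite) vec \<Rightarrow> (int, 'n) vec \<Rightarrow> int" where
  "pair x v = (\<Sum>i\<in>UNIV. x $ i * v $ i)"

definition refl :: "((int, 'n::finite) vec \<Rightarrow> (int, 'n) vec) \<Rightarrow> (int, 'n) vec \<Rightarrow> (int, 'n) vec \<Rightarrow> (int, 'n) vec" where
  "refl cor a x = x - pair x (cor a) *s a"

definition corefl :: "((int, 'n::finite) vec \<Rightarrow> (int, 'n) vec) \<Rightarrow> (int, 'n) vec \<Rightarrow> (int, 'n) vec \<Rightarrow> (int, 'n) vec" where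
  "corefl cor a v = v - pair a v *s cor a"

definition root_system :: "((int, 'n::finite) vec) set \<Rightarrow> ((int, 'n) vec \<Rightarrow> (int, 'n) vec) \<Rightarrow> bool" where
  "root_system R cor \<longleftrightarrow> finite R \<and> R \<noteq> {} \<and> inj_on cor R \<and>
     (\<forall>a\<in>R. pair a (cor a) = 2) \<and>
     (\<forall>a\<in>R. \<forall>b\<in>R. refl cor a b \<in> R) \<and>
     (\<forall>a\<in>R. \<forall>b\<in>R. corefl cor a (cor b) \<in> cor ` R)"

definition reduced :: "((int, 'n::finite) vec) set \<Rightarrow> bool" where
  "reduced R \<longleftrightarrow> (\<forall>a\<in>R. 2 *s a \<notin> R)"

definition irreducible_rs :: "((int, 'n::finite) vec) set \<Rightarrow> ((int, 'n) vec \<Rightarrow> (int, 'n) vec) \<Rightarrow> bool" where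
  "irreducible_rs R cor \<longleftrightarrow> R \<noteq> {} \<and>
     \<not> (\<exists>R1 R2. R1 \<union> R2 = R \<and> R1 \<inter> R2 = {} \<and> R1 \<noteq> {} \<and> R2 \<noteq> {} \<and>
            (\<forall>a\<in>R1. \<forall>b\<in>R2. pair a (cor b) = 0))"

definition is_base :: "((int, 'n::finite) vec) set \<Rightarrow> ((int, 'n) vec) set \<Rightarrow> bool" where
  "is_base R P \<longleftrightarrow> P \<subseteq> R \<and>
     (\<forall>c :: (int, 'n) vec \<Rightarrow> int. (\<Sum>a\<in>P. c a *s a) = 0 \<longrightarrow> (\<forall>a\<in>P. c a = 0)) \<and>
     (\<forall>b\<in>R. \<exists>c :: (int, 'n) vec \<Rightarrow> int. b = (\<Sum>a\<in>P. c a *s a) \<and>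
              ((\<forall>a\<in>P. c a \<ge> 0) \<or> (\<forall>a\<in>P. c a \<le> 0)))"

definition positive_roots :: "((int, 'n::finite) vec) set \<Rightarrow> ((int, 'n) vec) set \<Rightarrow> ((int, 'n) vec) set" where
  "positive_roots R P = {b\<in>R. \<exists>c :: (int, 'n) vec \<Rightarrow> int. b = (\<Sum>a\<in>P. c a *s a) \<and> (\<forall>a\<in>P. c a \<ge> 0)}"

definition highest_root :: "((int, 'n::finite) vec) set \<Rightarrow> ((int, 'n) vec) set \<Rightarrow> (int, 'n) vec \<Rightarrow> bool" where
  "highest_root R P g \<longleftrightarrow> g \<in> R \<and>
     (\<forall>b\<in>R. \<exists>c :: (int, 'n) vec \<Rightarrow> int. g - b = (\<Sum>a\<in>P. c a *s a) \<and> (\<forall>a\<in>P. c a \<ge> 0))"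

text \<open>Elements of Xhat are pairs (lambda, k); delta = (0,-1), so alpha + m delta = (alpha, -m).\<close>

definition affine_roots :: "((int, 'n::finite) vec) set \<Rightarrow> (((int, 'n) vec) \<times> int) set" where
  "affine_roots R = {(a, k) | a k. a \<in> R}"

text \<open>The generator s_{alpha,m} is encoded by the pair (alpha, m).  Its (contragredient) action
  on Xhat: s_{alpha,m}(lambda,k) = (lambda - <lambda,alpha^vee> alpha, k - m <lambda,alpha^vee>),
  i.e. the reflection along the affine root alpha - m delta.\<close>
definition act :: "((int, 'n::finite) vec \<Rightarrow> (int, 'n) vec) \<Rightarrow> ((int, 'n) vec) \<times> int \<Rightarrow> ((int, 'n) vec) \<times> int \<Rightarrow> ((int, 'n) vec) \<times> int" where
  "act cor t x = (fst x - pair (fst x) (cor (fst t)) *s fst t,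
                  snd x - snd t * pair (fst x) (cor (fst t)))"

definition Shat :: "((int, 'n::finite) vec) set \<Rightarrow> (int, 'n) vec \<Rightarrow> (((int, 'n) vec) \<times> int) set" where
  "Shat P g = {(a, 0) | a. a \<in> P} \<union> {(g, 1)}"

text \<open>Simple affine root of a simple reflection: alpha for s_{alpha,0}, -gamma + delta for s_{gamma,1}.\<close>
definition sroot :: "((int, 'n::finite) vec) \<times> int \<Rightarrow> ((int, 'n) vec) \<times> int" where
  "sroot t = (if snd t = 0 then (fst t, 0) else (- fst t, -1))"

definition Iset :: "nat \<Rightarrow> nat list set" where
  "Iset l = {\<sigma>. sorted_wrt (<) \<sigma> \<and> set \<sigma> \<subseteq> {1..l}}"

definition ev :: "((int, 'n::finite) vec \<Rightarrow> (int, 'n) vec) \<Rightarrow> (((int, 'n) vec) \<times> int) list \<Rightarrow> nat list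
    \<Rightarrow> ((int, 'n) vec) \<times> int \<Rightarrow> ((int, 'n) vec) \<times> int" where
  "ev cor s \<sigma> x = foldr (\<lambda>i. act cor (s ! (i - 1))) \<sigma> x"

text \<open>S_T = Sym(Xhat \<otimes> T) is the polynomial ring over T in the standard basis of
  Xhat \<otimes> T = T^('n option) (None = the Z-summand); X\<otimes>T is placed in degree 2.\<close>
type_synonym ('n, 't) spoly = "('n option \<Rightarrow>\<^sub>0 nat) \<Rightarrow>\<^sub>0 't"

definition tensT :: "((int, 'n::finite) vec) \<times> int \<Rightarrow> 'n option \<Rightarrow> 't::comm_ring_1" where
  "tensT x = (\<lambda>j. case j of None \<Rightarrow> of_int (snd x) | Some i \<Rightarrow> of_int (fst x $ i))"

definition linS :: "('n::finite option \<Rightarrow> 't::comm_ring_1) \<Rightarrow> ('n, 't) spoly" where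
  "linS w = (\<Sum>i\<in>UNIV. Poly_Mapping.single (Poly_Mapping.single i 1) (w i))"

definition linX :: "((int, 'n::finite) vec) \<times> int \<Rightarrow> ('n, 't::comm_ring_1) spoly" where
  "linX x = linS (tensT x)"

definition emb :: "('n::{finite,linorder}, 't::idom) spoly \<Rightarrow> ('n, 't) spoly fract" where
  "emb f = Fract f 1"

definition Sset :: "('n::{finite,linorder}, 't::idom) spoly fract set" where
  "Sset = range emb"

text \<open>Q_T = S_T[2^{-1}][beta^{-1} : beta affine root], inside the fraction field of S_T.\<close>
definition Dens :: "((int, 'n::{finite,linorder}) vec) set \<Rightarrow> ('n, 't::idom) spoly set" where
  "Dens R = {2 ^ k * prod_list (map linX bs) | k bs. set bs \<subseteq> affine_roots R}"

definition Qset :: "((int, 'n::{finite,linorder}) vec) set \<Rightarrow> ('n, 't::idom) spoly fract set" where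
  "Qset R = {Fract f d | f d. d \<in> Dens R}"

definition Delta :: "nat \<Rightarrow> (nat list \<Rightarrow> 'a) \<Rightarrow> nat list \<Rightarrow> 'a" where
  "Delta l z \<sigma> = (if \<sigma> \<noteq> [] \<and> last \<sigma> = l then z (butlast \<sigma>) else z \<sigma>)"

text \<open>Recursion on the reversed sequence: XR (rev s) = X_T(s).\<close>
primrec XR :: "((int, 'n::{finite,linorder}) vec \<Rightarrow> (int, 'n) vec) \<Rightarrow> (((int, 'n) vec) \<times> int) list
    \<Rightarrow> (nat list \<Rightarrow> ('n, 't::idom) spoly) set" where
  "XR cor [] = {z. \<forall>\<sigma>. \<sigma> \<noteq> [] \<longrightarrow> z \<sigma> = 0}"
| "XR cor (t # rs) =
     {(\<lambda>\<sigma>. Delta (Suc (length rs)) a \<sigma>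
            + linX (ev cor (rev (t # rs)) \<sigma> (sroot t)) * Delta (Suc (length rs)) b \<sigma>)
      | a b. a \<in> XR cor rs \<and> b \<in> XR cor rs}"

primrec YR :: "((int, 'n::{finite,linorder}) vec \<Rightarrow> (int, 'n) vec) \<Rightarrow> (((int, 'n) vec) \<times> int) list
    \<Rightarrow> (nat list \<Rightarrow> ('n, 't::idom) spoly fract) set" where
  "YR cor [] = {z. z [] \<in> Sset \<and> (\<forall>\<sigma>. \<sigma> \<noteq> [] \<longrightarrow> z \<sigma> = 0)}"
| "YR cor (t # rs) =
     {(\<lambda>\<sigma>. Delta (Suc (length rs)) a \<sigma>
            + Delta (Suc (length rs)) b \<sigma> / emb (linX (ev cor (rev (t # rs)) \<sigma> (sroot t))))
      | a b. a \<in> YR cor rs \<and> b \<in> YR cor rs}"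

definition Xmod :: "((int, 'n::{finite,linorder}) vec \<Rightarrow> (int, 'n) vec) \<Rightarrow> (((int, 'n) vec) \<times> int) list
    \<Rightarrow> (nat list \<Rightarrow> ('n, 't::idom) spoly) set" where
  "Xmod cor s = XR cor (rev s)"

definition Ymod :: "((int, 'n::{finite,linorder}) vec \<Rightarrow> (int, 'n) vec) \<Rightarrow> (((int, 'n) vec) \<times> int) list
    \<Rightarrow> (nat list \<Rightarrow> ('n, 't::idom) spoly fract) set" where
  "Ymod cor s = YR cor (rev s)"

definition homog :: "int \<Rightarrow> ('n, 't::zero) spoly \<Rightarrow> bool" where
  "homog k f \<longleftrightarrow> (\<forall>m\<in>Poly_Mapping.keys f. 2 * int (\<Sum>v\<in>Poly_Mapping.keys m. Poly_Mapping.lookup m v) = k)"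

definition ghom :: "(nat list \<Rightarrow> ('n, 't::comm_ring_1) spoly) set \<Rightarrow> int
    \<Rightarrow> ((nat list \<Rightarrow> ('n, 't) spoly) \<Rightarrow> ('n, 't) spoly) \<Rightarrow> bool" where
  "ghom M n \<phi> \<longleftrightarrow>
     (\<forall>x\<in>M. \<forall>y\<in>M. \<phi> (\<lambda>\<sigma>. x \<sigma> + y \<sigma>) = \<phi> x + \<phi> y) \<and>
     (\<forall>a. \<forall>x\<in>M. \<phi> (\<lambda>\<sigma>. a * x \<sigma>) = a * \<phi> x) \<and>
     (\<forall>k. \<forall>x\<in>M. (\<forall>\<sigma>. homog k (x \<sigma>)) \<longrightarrow> homog (n + k) (\<phi> x)) \<and>
     (\<forall>x. x \<notin> M \<longrightarrow> \<phi> x = 0)"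

definition gdual :: "(nat list \<Rightarrow> ('n, 't::comm_ring_1) spoly) set
    \<Rightarrow> ((nat list \<Rightarrow> ('n, 't) spoly) \<Rightarrow> ('n, 't) spoly) set" where
  "gdual M = {\<phi>. \<exists>F :: int set. \<exists>\<psi>. finite F \<and> (\<forall>n\<in>F. ghom M n (\<psi> n)) \<and>
                   \<phi> = (\<lambda>x. \<Sum>n\<in>F. \<psi> n x)}"

end

theory Submission
  imports Defs
begin

text \<open>Write \<open>\<sigma>'\<close> for \<open>\<sigma> @ [l]\<close>.  One step of the recursion sends \<open>(a, b)\<close> to
  \<open>x = \<Delta>a + \<beta>\<Delta>b\<close> in the X-module and \<open>(a', b')\<close> to \<open>y = \<Delta>a' + \<Delta>b'/\<beta>\<close> in the Y-module,
  where \<open>\<beta>\<^sub>\<sigma>\<close> is the linear form of the affine root \<open>ev(\<sigma>)(\<alpha>\<^sub>l)\<close>.  Since \<open>s\<^sub>l\<close> negates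
  \<open>\<alpha>\<^sub>l\<close>, \<open>\<beta>\<^sub>\<sigma>\<^sub>' = -\<beta>\<^sub>\<sigma>\<close>, so the pairing of \<open>x\<close> with any \<open>z\<close> is
  \<open>\<Sum>\<^sub>\<tau> a\<^sub>\<tau>(z\<^sub>\<tau> + z\<^sub>\<tau>\<^sub>') + b\<^sub>\<tau>\<beta>\<^sub>\<tau>(z\<^sub>\<tau> - z\<^sub>\<tau>\<^sub>')\<close>, which for \<open>z = y\<close> equals
  \<open>2\<langle>a,a'\<rangle> + 2\<langle>b,b'\<rangle>\<close>.  As \<open>2\<close> is invertible, \<open>z \<mapsto> ((z\<^sub>\<tau> + z\<^sub>\<tau>\<^sub>')/2, \<beta>\<^sub>\<tau>(z\<^sub>\<tau> - z\<^sub>\<tau>\<^sub>')/2)\<close>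
  and \<open>x \<mapsto> (x\<^sub>\<tau> + x\<^sub>\<tau>\<^sub>', (x\<^sub>\<tau> - x\<^sub>\<tau>\<^sub>')/\<beta>\<^sub>\<tau>)\<close> invert the two steps (the latter up to the
  factor 2), so duality, representability of functionals and nondegeneracy of the pairing pass
  from one step to the next.  The functional paired with \<open>\<Delta>b'/\<beta>\<close> is shifted in degree by 2,
  the degree of \<open>\<beta>\<close>.\<close>

lemma emb_add: "emb (f + g) = emb f + emb g" by (simp add: emb_def)
lemma emb_mult: "emb (f * g) = emb f * emb g" by (simp add: emb_def)
lemma emb_uminus: "emb (- f) = - emb f" by (simp add: emb_def)
lemma emb_diff: "emb (f - g) = emb f - emb g" by (simp add: emb_def)
lemma emb_0 [simp]: "emb 0 = 0" by (simp add: emb_def fract_collapse)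
lemma emb_1 [simp]: "emb 1 = 1" by (simp add: emb_def fract_collapse)
lemma emb_2: "emb 2 = 2" using emb_add[of 1 1] by simp
lemma emb_eq_0_iff: "emb f = 0 \<longleftrightarrow> f = 0"
  unfolding emb_0[symmetric] by (simp add: emb_def eq_fract)

lemma Sset_emb [simp]: "emb c \<in> Sset" by (simp add: Sset_def)
lemma Sset_add: "x \<in> Sset \<Longrightarrow> y \<in> Sset \<Longrightarrow> x + y \<in> Sset"
  by (auto simp: Sset_def emb_add[symmetric])
lemma Sset_mult: "x \<in> Sset \<Longrightarrow> y \<in> Sset \<Longrightarrow> x * y \<in> Sset"
  by (auto simp: Sset_def emb_mult[symmetric])

lemma half_in_spoly:
  assumes "\<exists>u::'t::comm_ring_1. 2 * u = 1"
  shows "\<exists>h :: ('n, 't) spoly. 2 * h = 1"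
proof -
  obtain u :: 't where u: "2 * u = 1" using assms by blast
  have "(2 :: ('n, 't) spoly) * Poly_Mapping.single 0 u = Poly_Mapping.single 0 (2 * u)"
    by (simp only: single_numeral[symmetric] mult_single add_0_left)
  then show ?thesis using u by (auto simp: single_one)
qed

lemma Iset_mem: "\<sigma> \<in> Iset n \<Longrightarrow> i \<in> set \<sigma> \<Longrightarrow> 1 \<le> i \<and> i \<le> n"
  by (auto simp: Iset_def)

lemma Iset_0: "Iset 0 = {[]}"
  by (auto simp: Iset_def)

lemma finite_Iset: "finite (Iset n)"
proof -
  have "Iset n \<subseteq> {xs. set xs \<subseteq> {1..n} \<and> length xs \<le> n}"
  proof
    fix xs assume "xs \<in> Iset n"
    hence d: "distinct xs" and s: "set xs \<subseteq> {1..n}"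
      by (auto simp: Iset_def strict_sorted_iff)
    have "length xs = card (set xs)" using d by (simp add: distinct_card)
    also have "\<dots> \<le> card {1..n}" using s by (intro card_mono) auto
    finally show "xs \<in> {xs. set xs \<subseteq> {1..n} \<and> length xs \<le> n}" using s by auto
  qed
  thus ?thesis by (rule finite_subset) (rule finite_lists_length_le, simp)
qed

lemma snoc_in_Iset_Suc: "\<tau> \<in> Iset n \<Longrightarrow> \<tau> @ [Suc n] \<in> Iset (Suc n)"
  by (auto simp: Iset_def sorted_wrt_append)

lemma snoc_notin_Iset: "\<tau> @ [Suc n] \<notin> Iset n"
  by (auto simp: Iset_def)

lemma Iset_mono: "\<tau> \<in> Iset n \<Longrightarrow> \<tau> \<in> Iset (Suc n)"
  by (auto simp: Iset_def)

lemma Iset_Suc_cases: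
  assumes "\<sigma> \<in> Iset (Suc n)"
  obtains "\<sigma> \<in> Iset n" | \<tau> where "\<tau> \<in> Iset n" "\<sigma> = \<tau> @ [Suc n]"
proof (cases "Suc n \<in> set \<sigma>")
  case False
  have "set \<sigma> \<subseteq> {1..n}"
  proof
    fix x assume "x \<in> set \<sigma>"
    then have "1 \<le> x \<and> x \<le> Suc n" "x \<noteq> Suc n" using assms False by (auto simp: Iset_def)
    then show "x \<in> {1..n}" by auto
  qed
  then show ?thesis using assms that(1) by (auto simp: Iset_def)
next
  case True
  then have ne: "\<sigma> \<noteq> []" by auto
  have eq: "\<sigma> = butlast \<sigma> @ [last \<sigma>]" using ne by simp
  have sw: "sorted_wrt (<) (butlast \<sigma> @ [last \<sigma>])" using assms eq by (simp add: Iset_def)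
  have lt: "\<forall>x\<in>set (butlast \<sigma>). x < last \<sigma>" using sw by (simp add: sorted_wrt_append)
  have "last \<sigma> \<le> Suc n" using assms last_in_set[OF ne] by (auto simp: Iset_def)
  moreover have "Suc n \<le> last \<sigma>"
    using True lt by (subst (asm) eq) fastforce
  ultimately have last: "last \<sigma> = Suc n" by simp
  have "set (butlast \<sigma>) \<subseteq> {1..n}"
    using assms lt last by (force simp: Iset_def dest: in_set_butlastD)
  then have "butlast \<sigma> \<in> Iset n"
    using sw by (simp add: Iset_def sorted_wrt_append)
  then show ?thesis using that(2) eq last by metis
qed

lemma sum_Iset_Suc:
  "(\<Sum>\<sigma>\<in>Iset (Suc n). f \<sigma>) = (\<Sum>\<tau>\<in>Iset n. f \<tau> + f (\<tau> @ [Suc n]))"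
proof -
  have e: "Iset (Suc n) = Iset n \<union> (\<lambda>\<tau>. \<tau> @ [Suc n]) ` Iset n"
    by (auto elim: Iset_Suc_cases intro: Iset_mono snoc_in_Iset_Suc)
  have d: "Iset n \<inter> (\<lambda>\<tau>. \<tau> @ [Suc n]) ` Iset n = {}" using snoc_notin_Iset by blast
  have "(\<Sum>\<sigma>\<in>Iset (Suc n). f \<sigma>) = (\<Sum>\<sigma>\<in>Iset n. f \<sigma>) + (\<Sum>\<sigma>\<in>(\<lambda>\<tau>. \<tau> @ [Suc n]) ` Iset n. f \<sigma>)"
    unfolding e by (rule sum.union_disjoint) (auto simp: finite_Iset d)
  also have "(\<Sum>\<sigma>\<in>(\<lambda>\<tau>. \<tau> @ [Suc n]) ` Iset n. f \<sigma>) = (\<Sum>\<tau>\<in>Iset n. f (\<tau> @ [Suc n]))"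
    by (rule sum.reindex_cong[where l="\<lambda>\<tau>. \<tau> @ [Suc n]"]) (auto simp: inj_on_def)
  finally show ?thesis by (simp add: sum.distrib)
qed

lemma Delta_Iset: "\<tau> \<in> Iset n \<Longrightarrow> Delta (Suc n) z \<tau> = z \<tau>"
  by (metis Delta_def Iset_mem Suc_n_not_le_n last_in_set)

lemma Delta_snoc: "Delta l z (\<tau> @ [l]) = z \<tau>"
  by (simp add: Delta_def)

lemma Delta_add: "Delta l (\<lambda>\<sigma>. a \<sigma> + b \<sigma>) = (\<lambda>\<sigma>. Delta l a \<sigma> + Delta l b \<sigma>)"
  by (simp add: Delta_def fun_eq_iff)

lemma Delta_mult: "Delta l (\<lambda>\<sigma>. c * a \<sigma>) = (\<lambda>\<sigma>. c * Delta l a \<sigma>)"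
  by (simp add: Delta_def fun_eq_iff)

lemma Delta_const [simp]: "Delta l (\<lambda>\<sigma>. c) = (\<lambda>\<sigma>. c)"
  by (simp add: Delta_def fun_eq_iff)

definition supported :: "nat \<Rightarrow> (nat list \<Rightarrow> 'a::zero) \<Rightarrow> bool" where
  "supported n z \<longleftrightarrow> (\<forall>\<sigma>. \<sigma> \<notin> Iset n \<longrightarrow> z \<sigma> = 0)"

lemma supported_Delta:
  assumes "supported n z" "\<sigma> \<notin> Iset (Suc n)"
  shows "Delta (Suc n) z \<sigma> = 0"
proof (cases "\<sigma> \<noteq> [] \<and> last \<sigma> = Suc n")
  case True
  then have "\<sigma> = butlast \<sigma> @ [Suc n]" by (metis append_butlast_last_id)
  then have "butlast \<sigma> \<notin> Iset n" using assms(2) snoc_in_Iset_Suc by metis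
  then show ?thesis using True assms(1) by (simp add: Delta_def supported_def)
next
  case False
  then have "\<sigma> \<notin> Iset n" using assms(2) Iset_mono by blast
  then show ?thesis using False assms(1) unfolding Delta_def supported_def by auto
qed

lemma supported_eqI:
  assumes "supported n y" "supported n y'" "\<And>\<sigma>. \<sigma> \<in> Iset n \<Longrightarrow> y \<sigma> = y' \<sigma>"
  shows "y = y'"
  by (rule ext) (metis assms supported_def)


section \<open>Grading\<close>

definition deg :: "('a \<Rightarrow>\<^sub>0 nat) \<Rightarrow> nat" where
  "deg m = (\<Sum>v\<in>Poly_Mapping.keys m. Poly_Mapping.lookup m v)"

lemma homog_iff: "homog k f \<longleftrightarrow> (\<forall>m\<in>Poly_Mapping.keys f. 2 * int (deg m) = k)"
  by (simp add: homog_def deg_def)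

lemma deg_superset:
  assumes "finite K" "Poly_Mapping.keys m \<subseteq> K"
  shows "deg m = (\<Sum>v\<in>K. Poly_Mapping.lookup m v)"
  unfolding deg_def by (rule sum.mono_neutral_left[OF assms]) (simp add: in_keys_iff)

lemma deg_add: "deg (a + b) = deg a + deg b"
proof -
  let ?K = "Poly_Mapping.keys a \<union> Poly_Mapping.keys b"
  have "deg (a + b) = (\<Sum>v\<in>?K. Poly_Mapping.lookup (a + b) v)"
    by (rule deg_superset) (simp_all add: keys_add)
  also have "\<dots> = (\<Sum>v\<in>?K. Poly_Mapping.lookup a v) + (\<Sum>v\<in>?K. Poly_Mapping.lookup b v)"
    by (simp add: lookup_add sum.distrib)
  also have "\<dots> = deg a + deg b"
    by (simp add: deg_superset[of ?K a] deg_superset[of ?K b])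
  finally show ?thesis .
qed

lemma deg_single_1: "deg (Poly_Mapping.single i (1::nat)) = 1"
  by (simp add: deg_def)

lemma keys_multE:
  assumes "m \<in> Poly_Mapping.keys (f * g)"
  obtains x y where "m = x + y" "x \<in> Poly_Mapping.keys f" "y \<in> Poly_Mapping.keys g"
  using subsetD[OF keys_mult assms] by blast

lemma homog_0 [simp]: "homog k 0" by (simp add: homog_def)

lemma homog_add: "homog k f \<Longrightarrow> homog k g \<Longrightarrow> homog k (f + g)"
  unfolding homog_def using subsetD[OF keys_add] by (metis Un_iff)

lemma homog_diff: "homog k f \<Longrightarrow> homog k g \<Longrightarrow> homog k (f - g)"
  unfolding homog_def using subsetD[OF keys_diff] by (metis Un_iff)

lemma homog_mult:
  fixes f g :: "('n, 't::comm_semiring_0) spoly"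
  assumes "homog a f" "homog b g"
  shows "homog (a + b) (f * g)"
  unfolding homog_iff
proof
  fix m assume "m \<in> Poly_Mapping.keys (f * g)"
  then obtain x y where "m = x + y" "x \<in> Poly_Mapping.keys f" "y \<in> Poly_Mapping.keys g"
    by (rule keys_multE)
  moreover have "2 * int (deg x) = a" "2 * int (deg y) = b"
    using assms \<open>x \<in> _\<close> \<open>y \<in> _\<close> unfolding homog_iff by auto
  ultimately show "2 * int (deg m) = a + b" by (simp add: deg_add)
qed

definition homog_part :: "int \<Rightarrow> ('n, 't::zero) spoly \<Rightarrow> ('n, 't) spoly" where
  "homog_part k f = Poly_Mapping.mapp (\<lambda>m v. if 2 * int (deg m) = k then v else 0) f"

lemma lookup_homog_part:
  "Poly_Mapping.lookup (homog_part k f) m = (if 2 * int (deg m) = k then Poly_Mapping.lookup f m else 0)"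
  by (auto simp: homog_part_def lookup_mapp when_def in_keys_iff)

lemma homog_homog_part: "homog k (homog_part k f)"
  unfolding homog_iff by (auto simp: in_keys_iff lookup_homog_part split: if_splits)

lemma sum_homog_parts:
  fixes f :: "('n, 't::comm_monoid_add) spoly"
  shows "(\<Sum>k\<in>(\<lambda>m. 2 * int (deg m)) ` Poly_Mapping.keys f. homog_part k f) = f"
proof (rule poly_mapping_eqI)
  fix m
  show "Poly_Mapping.lookup (\<Sum>k\<in>(\<lambda>m. 2 * int (deg m)) ` Poly_Mapping.keys f. homog_part k f) m
      = Poly_Mapping.lookup f m"
    by (auto simp: lookup_sum lookup_homog_part sum.delta' in_keys_iff)
qed

text \<open>Compare the components of degree \<open>j + d\<close> of \<open>\<beta>f\<close>, where \<open>j \<noteq> k - d\<close> is the degree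
  of some monomial of \<open>f\<close>: only the degree-\<open>j\<close> part \<open>f\<^sub>j\<close> of \<open>f\<close> contributes, so \<open>\<beta>f\<^sub>j = 0\<close>.\<close>
lemma homog_cancel_left:
  fixes \<beta> f :: "('n::linorder, 't::idom) spoly"
  assumes hb: "homog d \<beta>" and nz: "\<beta> \<noteq> 0" and hf: "homog k (\<beta> * f)"
  shows "homog (k - d) f"
  unfolding homog_iff
proof (rule ballI, rule ccontr)
  fix m0 assume m0: "m0 \<in> Poly_Mapping.keys f" and ne: "2 * int (deg m0) \<noteq> k - d"
  define j where "j = 2 * int (deg m0)"
  define fj where "fj = homog_part j f"
  define fr where "fr = f - fj"
  have lfr: "Poly_Mapping.lookup fr m = (if 2 * int (deg m) = j then 0 else Poly_Mapping.lookup f m)" for m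
    by (simp add: fr_def fj_def lookup_minus lookup_homog_part)
  have kfj: "2 * int (deg m) = j + d" if "m \<in> Poly_Mapping.keys (\<beta> * fj)" for m
  proof -
    from that obtain x y where "m = x + y" "x \<in> Poly_Mapping.keys \<beta>" "y \<in> Poly_Mapping.keys fj"
      by (rule keys_multE)
    then show ?thesis
      using hb by (auto simp: homog_iff deg_add fj_def in_keys_iff lookup_homog_part split: if_splits)
  qed
  have kfr: "2 * int (deg m) \<noteq> j + d" if "m \<in> Poly_Mapping.keys (\<beta> * fr)" for m
  proof -
    from that obtain x y where "m = x + y" "x \<in> Poly_Mapping.keys \<beta>" "y \<in> Poly_Mapping.keys fr"
      by (rule keys_multE)
    then show ?thesis using hb by (auto simp: homog_iff deg_add in_keys_iff lfr split: if_splits)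
  qed
  have "\<beta> * fj = 0"
  proof (rule poly_mapping_eqI)
    fix m
    show "Poly_Mapping.lookup (\<beta> * fj) m = Poly_Mapping.lookup 0 m"
    proof (cases "m \<in> Poly_Mapping.keys (\<beta> * fj)")
      case False then show ?thesis by (simp add: in_keys_iff)
    next
      case True
      then have d: "2 * int (deg m) = j + d" by (rule kfj)
      then have "m \<notin> Poly_Mapping.keys (\<beta> * fr)" using kfr by blast
      moreover have "m \<notin> Poly_Mapping.keys (\<beta> * f)" using hf d ne j_def by (auto simp: homog_iff)
      moreover have "\<beta> * f = \<beta> * fj + \<beta> * fr" by (simp add: fr_def algebra_simps)
      ultimately show ?thesis by (simp add: in_keys_iff lookup_add)
    qed
  qed
  then have "fj = 0" using nz by simp
  moreover have "Poly_Mapping.lookup fj m0 \<noteq> 0"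
    using m0 by (simp add: fj_def lookup_homog_part j_def in_keys_iff)
  ultimately show False by simp
qed

lemma single_1_eq_iff: "Poly_Mapping.single i (1::nat) = Poly_Mapping.single j 1 \<longleftrightarrow> i = j"
  by (metis lookup_single_eq lookup_single_not_eq one_neq_zero)

lemma keys_linX: "Poly_Mapping.keys (linX x :: ('n::finite, 't::comm_ring_1) spoly)
    \<subseteq> range (\<lambda>i. Poly_Mapping.single i 1)"
proof -
  have "Poly_Mapping.keys (linX x :: ('n, 't) spoly)
      \<subseteq> (\<Union>i. Poly_Mapping.keys (Poly_Mapping.single (Poly_Mapping.single i (1::nat)) (tensT x i :: 't)))"
    unfolding linX_def linS_def by (rule keys_sum)
  then show ?thesis by (auto split: if_splits)
qed

lemma homog_linX: "homog 2 (linX x :: ('n::finite, 't::comm_ring_1) spoly)"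
  unfolding homog_iff
proof
  fix m assume "m \<in> Poly_Mapping.keys (linX x :: ('n, 't) spoly)"
  then obtain i where "m = Poly_Mapping.single i 1" using keys_linX by blast
  then show "2 * int (deg m) = 2" by (simp only: deg_single_1)
qed

lemma lookup_linX:
  "Poly_Mapping.lookup (linX x :: ('n::finite, 't::comm_ring_1) spoly) (Poly_Mapping.single j 1) = tensT x j"
proof -
  have "Poly_Mapping.lookup (linX x :: ('n, 't) spoly) (Poly_Mapping.single j 1)
     = (\<Sum>i\<in>UNIV. if i = j then tensT x i else 0)"
    by (simp only: linX_def linS_def lookup_sum lookup_single when_def single_1_eq_iff)
  then show ?thesis by simp
qed

lemma linX_nonzero:
  assumes "tensT x j \<noteq> (0::'t::comm_ring_1)"
  shows "(linX x :: ('n::finite, 't) spoly) \<noteq> 0"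
  using assms lookup_linX[of x j] by (metis lookup_zero)

section \<open>Reflections of affine roots\<close>

definition neg_prod :: "'a::uminus \<times> 'b::uminus \<Rightarrow> 'a \<times> 'b" where
  "neg_prod x = (- fst x, - snd x)"

lemma pair_uminus: "pair (- x) v = - pair x v"
  by (simp add: pair_def sum_negf)

lemma act_neg_prod: "act cor t (neg_prod x) = neg_prod (act cor t x)"
  by (simp add: act_def neg_prod_def pair_uminus vec_eq_iff algebra_simps)

lemma ev_neg_prod: "ev cor s \<tau> (neg_prod x) = neg_prod (ev cor s \<tau> x)"
  by (induction \<tau>) (simp_all add: ev_def act_neg_prod)

lemma ev_snoc: "ev cor s (\<tau> @ [k]) x = ev cor s \<tau> (act cor (s ! (k - 1)) x)"
  by (simp add: ev_def)

lemma linX_neg_prod: "(linX (neg_prod x) :: ('n::finite, 't::comm_ring_1) spoly) = - linX x"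
proof -
  have "(tensT (neg_prod x) :: _ \<Rightarrow> 't) = (\<lambda>j. - tensT x j)"
    by (auto simp: tensT_def neg_prod_def fun_eq_iff split: option.splits)
  then show ?thesis by (simp add: linX_def linS_def single_uminus sum_negf)
qed

lemma fst_act: "fst (act cor t x) = refl cor (fst t) (fst x)"
  by (simp add: act_def refl_def)

locale affine_root_datum =
  fixes R :: "((int, 'n::{finite,linorder}) vec) set"
    and cor :: "(int, 'n) vec \<Rightarrow> (int, 'n) vec"
    and P :: "((int, 'n) vec) set"
    and g :: "(int, 'n) vec"
  assumes root_system: "root_system R cor"
    and base: "is_base R P"
    and highest: "highest_root R P g"
begin

lemma pair_cor_self: "a \<in> R \<Longrightarrow> pair a (cor a) = 2"
  using root_system by (simp add: root_system_def)

lemma refl_closed: "a \<in> R \<Longrightarrow> b \<in> R \<Longrightarrow> refl cor a b \<in> R"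
  using root_system by (simp add: root_system_def)

lemma uminus_root:
  assumes "a \<in> R"
  shows "- a \<in> R"
proof -
  have "refl cor a a = - a"
    using pair_cor_self[OF assms] by (simp add: refl_def vec_eq_iff)
  then show ?thesis using refl_closed[OF assms assms] by simp
qed

lemma fst_Shat: "t \<in> Shat P g \<Longrightarrow> fst t \<in> R"
  using base highest by (auto simp: Shat_def is_base_def highest_root_def)

lemma fst_sroot: "t \<in> Shat P g \<Longrightarrow> fst (sroot t) \<in> R"
  using fst_Shat uminus_root by (auto simp: Shat_def sroot_def)

lemma act_sroot:
  assumes "t \<in> Shat P g"
  shows "act cor t (sroot t) = neg_prod (sroot t)"
proof -
  have "pair (fst t) (cor (fst t)) = 2" using pair_cor_self fst_Shat[OF assms] by blast
  then show ?thesis using assms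
    by (auto simp: Shat_def act_def sroot_def neg_prod_def vec_eq_iff pair_uminus)
qed

lemma fst_ev_in_R:
  assumes "\<forall>i\<in>set \<tau>. fst (s ! (i - 1)) \<in> R" and "fst x \<in> R"
  shows "fst (ev cor s \<tau> x) \<in> R"
  using assms by (induction \<tau>) (simp_all add: ev_def fst_act refl_closed)

text \<open>The multiplier of \<open>c\<^sup>\<alpha>\<close> for \<open>\<alpha> = sroot t\<close>, the last simple affine root of \<open>rev (t # rs)\<close>.\<close>
definition root_factor :: "(((int, 'n) vec) \<times> int) \<Rightarrow> (((int, 'n) vec) \<times> int) list \<Rightarrow> nat list
    \<Rightarrow> ('n, 't::idom) spoly" where
  "root_factor t rs \<sigma> = linX (ev cor (rev (t # rs)) \<sigma> (sroot t))"

lemma root_factor_snoc: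
  assumes "t \<in> Shat P g"
  shows "root_factor t rs (\<tau> @ [Suc (length rs)]) = - root_factor t rs \<tau>"
proof -
  have "rev (t # rs) ! (Suc (length rs) - 1) = t" by (simp add: nth_append)
  then show ?thesis
    using assms by (simp add: root_factor_def ev_snoc act_sroot ev_neg_prod linX_neg_prod)
qed

lemma ev_sroot_affine_root:
  assumes "t \<in> Shat P g" "set rs \<subseteq> Shat P g" "\<tau> \<in> Iset (length rs)"
  shows "ev cor (rev (t # rs)) \<tau> (sroot t) \<in> affine_roots R"
proof -
  have "rev (t # rs) ! (i - 1) \<in> Shat P g" if "i \<in> set \<tau>" for i
  proof -
    have "1 \<le> i" "i \<le> length rs" using Iset_mem assms(3) that by blast+
    then have "rev (t # rs) ! (i - 1) \<in> set (rev (t # rs))" by (intro nth_mem) simp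
    then show ?thesis using assms by auto
  qed
  then have "fst (ev cor (rev (t # rs)) \<tau> (sroot t)) \<in> R"
    by (intro fst_ev_in_R fst_sroot assms(1)) (blast intro: fst_Shat)
  then show ?thesis unfolding affine_roots_def by (metis (mono_tags, lifting) mem_Collect_eq prod.collapse)
qed

end

section \<open>The localisation Q\<close>

lemma Dens_1: "1 \<in> Dens R"
  unfolding Dens_def by (rule CollectI, rule exI[of _ 0], rule exI[of _ "[]"]) simp

lemma Dens_mult: "d \<in> Dens R \<Longrightarrow> d' \<in> Dens R \<Longrightarrow> d * d' \<in> Dens R"
proof -
  assume "d \<in> Dens R" "d' \<in> Dens R"
  then obtain k bs k' bs' where d: "d = 2 ^ k * prod_list (map linX bs)" "set bs \<subseteq> affine_roots R"
    and d': "d' = 2 ^ k' * prod_list (map linX bs')" "set bs' \<subseteq> affine_roots R"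
    unfolding Dens_def by blast
  have "d * d' = 2 ^ (k + k') * prod_list (map linX (bs @ bs'))"
    by (simp add: d d' power_add algebra_simps)
  moreover have "set (bs @ bs') \<subseteq> affine_roots R" using d d' by auto
  ultimately show ?thesis unfolding Dens_def by blast
qed

lemma linX_in_Dens: "x \<in> affine_roots R \<Longrightarrow> linX x \<in> Dens R"
  unfolding Dens_def by (rule CollectI, rule exI[of _ 0], rule exI[of _ "[x]"]) simp

lemma Qset_emb: "emb c \<in> Qset R"
  unfolding Qset_def emb_def using Dens_1 by blast

lemma Qset_0: "0 \<in> Qset R" using Qset_emb[of 0 R] by simp

lemma QsetE:
  assumes "q \<in> Qset R"
  obtains f d where "q = Fract f d" "d \<in> Dens R"
  using assms unfolding Qset_def by blast

lemma Qset_add: "p \<in> Qset R \<Longrightarrow> q \<in> Qset R \<Longrightarrow> p + q \<in> Qset R"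
proof -
  assume p: "p \<in> Qset R" and q: "q \<in> Qset R"
  obtain f d where pf: "p = Fract f d" "d \<in> Dens R" using p by (rule QsetE)
  obtain f' d' where qf: "q = Fract f' d'" "d' \<in> Dens R" using q by (rule QsetE)
  show ?thesis
  proof (cases "d = 0 \<or> d' = 0")
    case True
    then show ?thesis using p q pf qf by (auto simp: fract_collapse)
  next
    case False
    then have "p + q = Fract (f * d' + f' * d) (d * d')" using pf qf by simp
    then show ?thesis using Dens_mult[OF pf(2) qf(2)] unfolding Qset_def by blast
  qed
qed

lemma Qset_mult: "p \<in> Qset R \<Longrightarrow> q \<in> Qset R \<Longrightarrow> p * q \<in> Qset R"
proof -
  assume p: "p \<in> Qset R" and q: "q \<in> Qset R"
  obtain f d where pf: "p = Fract f d" "d \<in> Dens R" using p by (rule QsetE)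
  obtain f' d' where qf: "q = Fract f' d'" "d' \<in> Dens R" using q by (rule QsetE)
  have "p * q = Fract (f * f') (d * d')" using pf qf by simp
  then show ?thesis using Dens_mult[OF pf(2) qf(2)] unfolding Qset_def by blast
qed

lemma Qset_uminus: "p \<in> Qset R \<Longrightarrow> - p \<in> Qset R"
proof -
  assume p: "p \<in> Qset R"
  obtain f d where pf: "p = Fract f d" "d \<in> Dens R" using p by (rule QsetE)
  have "- p = Fract (- f) d" using pf by simp
  then show ?thesis using pf(2) unfolding Qset_def by blast
qed

lemma Qset_diff: "p \<in> Qset R \<Longrightarrow> q \<in> Qset R \<Longrightarrow> p - q \<in> Qset R"
  using Qset_add[of p R "- q"] Qset_uminus[of q R] by simp

lemma Qset_divide_linX: "p \<in> Qset R \<Longrightarrow> x \<in> affine_roots R \<Longrightarrow> p / emb (linX x) \<in> Qset R"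
proof -
  assume p: "p \<in> Qset R" and x: "x \<in> affine_roots R"
  obtain f d where pf: "p = Fract f d" "d \<in> Dens R" using p by (rule QsetE)
  have "p / emb (linX x) = Fract (f * 1) (d * linX x)" using pf by (simp add: emb_def)
  then show ?thesis using Dens_mult[OF pf(2) linX_in_Dens[OF x]] unfolding Qset_def by blast
qed

definition Xstep :: "nat \<Rightarrow> (nat list \<Rightarrow> 'a::comm_ring_1) \<Rightarrow> (nat list \<Rightarrow> 'a) set \<Rightarrow> (nat list \<Rightarrow> 'a) set" where
  "Xstep l \<beta> A = {(\<lambda>\<sigma>. Delta l a \<sigma> + \<beta> \<sigma> * Delta l b \<sigma>) | a b. a \<in> A \<and> b \<in> A}"

definition Ystep :: "nat \<Rightarrow> (nat list \<Rightarrow> ('n::{finite,linorder}, 't::idom) spoly)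
    \<Rightarrow> (nat list \<Rightarrow> ('n, 't) spoly fract) set \<Rightarrow> (nat list \<Rightarrow> ('n, 't) spoly fract) set" where
  "Ystep l \<beta> B = {(\<lambda>\<sigma>. Delta l a \<sigma> + Delta l b \<sigma> / emb (\<beta> \<sigma>)) | a b. a \<in> B \<and> b \<in> B}"

definition is_submodule :: "(nat list \<Rightarrow> 'a::comm_ring_1) set \<Rightarrow> bool" where
  "is_submodule A \<longleftrightarrow> (\<lambda>\<sigma>. 0) \<in> A \<and> (\<forall>x\<in>A. \<forall>y\<in>A. (\<lambda>\<sigma>. x \<sigma> + y \<sigma>) \<in> A) \<and>
     (\<forall>c. \<forall>x\<in>A. (\<lambda>\<sigma>. c * x \<sigma>) \<in> A)"

definition Qdual :: "((int, 'n::{finite,linorder}) vec) set \<Rightarrow> nat \<Rightarrow> (nat list \<Rightarrow> ('n, 't::idom) spoly) set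
    \<Rightarrow> (nat list \<Rightarrow> ('n, 't) spoly fract) set" where
  "Qdual R n A = {z. supported n z \<and> (\<forall>\<sigma>. z \<sigma> \<in> Qset R) \<and>
     (\<forall>m\<in>A. (\<Sum>\<sigma>\<in>Iset n. z \<sigma> * emb (m \<sigma>)) \<in> Sset)}"

definition represents :: "nat \<Rightarrow> (nat list \<Rightarrow> ('n::{finite,linorder}, 't::idom) spoly) set
    \<Rightarrow> ((nat list \<Rightarrow> ('n, 't) spoly) \<Rightarrow> ('n, 't) spoly) \<Rightarrow> (nat list \<Rightarrow> ('n, 't) spoly fract) \<Rightarrow> bool" where
  "represents n A \<phi> y \<longleftrightarrow> (\<forall>x\<in>A. emb (\<phi> x) = (\<Sum>\<sigma>\<in>Iset n. emb (x \<sigma>) * y \<sigma>))"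

definition S_linear :: "(nat list \<Rightarrow> 'a::comm_ring_1) set \<Rightarrow> ((nat list \<Rightarrow> 'a) \<Rightarrow> 'a) \<Rightarrow> bool" where
  "S_linear A \<phi> \<longleftrightarrow> (\<forall>x\<in>A. \<forall>y\<in>A. \<phi> (\<lambda>\<sigma>. x \<sigma> + y \<sigma>) = \<phi> x + \<phi> y) \<and>
     (\<forall>c. \<forall>x\<in>A. \<phi> (\<lambda>\<sigma>. c * x \<sigma>) = c * \<phi> x)"

definition pairing_nondegenerate :: "nat \<Rightarrow> (nat list \<Rightarrow> ('n::{finite,linorder}, 't::idom) spoly) set \<Rightarrow> bool" where
  "pairing_nondegenerate n A \<longleftrightarrow>
     (\<forall>w. (\<forall>x\<in>A. (\<Sum>\<sigma>\<in>Iset n. emb (x \<sigma>) * w \<sigma>) = 0) \<longrightarrow> (\<forall>\<sigma>\<in>Iset n. w \<sigma> = 0))"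

lemma represents_unique:
  assumes "pairing_nondegenerate n A" "supported n y" "supported n y'"
    and "represents n A \<phi> y" "represents n A \<phi> y'"
  shows "y = y'"
proof (rule supported_eqI[OF assms(2,3)])
  have "(\<Sum>\<sigma>\<in>Iset n. emb (x \<sigma>) * (y \<sigma> - y' \<sigma>)) = 0" if "x \<in> A" for x
    using assms(4,5) that by (simp add: represents_def right_diff_distrib sum_subtractf)
  then show "y \<sigma> = y' \<sigma>" if "\<sigma> \<in> Iset n" for \<sigma>
    using assms(1)[unfolded pairing_nondegenerate_def, rule_format, of "\<lambda>\<sigma>. y \<sigma> - y' \<sigma>"] that
    by simp
qed

lemma XstepE:
  assumes "x \<in> Xstep l \<beta> A"
  obtains a b where "x = (\<lambda>\<sigma>. Delta l a \<sigma> + \<beta> \<sigma> * Delta l b \<sigma>)" "a \<in> A" "b \<in> A"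
  using assms unfolding Xstep_def by blast

lemma YstepE:
  assumes "y \<in> Ystep l \<beta> B"
  obtains a b where "y = (\<lambda>\<sigma>. Delta l a \<sigma> + Delta l b \<sigma> / emb (\<beta> \<sigma>))" "a \<in> B" "b \<in> B"
  using assms unfolding Ystep_def by blast

lemma Delta_in_Xstep:
  assumes "is_submodule A" "a \<in> A"
  shows "Delta l a \<in> Xstep l \<beta> A"
proof -
  have "Delta l a = (\<lambda>\<sigma>. Delta l a \<sigma> + \<beta> \<sigma> * Delta l (\<lambda>\<sigma>. 0) \<sigma>)" by simp
  then show ?thesis using assms unfolding Xstep_def is_submodule_def by blast
qed

lemma mult_Delta_in_Xstep:
  assumes "is_submodule A" "b \<in> A"
  shows "(\<lambda>\<sigma>. \<beta> \<sigma> * Delta l b \<sigma>) \<in> Xstep l \<beta> A"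
proof -
  have "(\<lambda>\<sigma>. \<beta> \<sigma> * Delta l b \<sigma>) = (\<lambda>\<sigma>. Delta l (\<lambda>\<sigma>. 0) \<sigma> + \<beta> \<sigma> * Delta l b \<sigma>)" by simp
  then show ?thesis using assms unfolding Xstep_def is_submodule_def by blast
qed

lemma is_submodule_Xstep:
  assumes A: "is_submodule A"
  shows "is_submodule (Xstep l \<beta> A)"
  unfolding is_submodule_def
proof (intro conjI ballI allI)
  have "(\<lambda>\<sigma>. 0) \<in> A" using A by (simp add: is_submodule_def)
  from Delta_in_Xstep[OF A this, of l \<beta>] show "(\<lambda>\<sigma>. 0) \<in> Xstep l \<beta> A" by simp
next
  fix x y assume "x \<in> Xstep l \<beta> A" "y \<in> Xstep l \<beta> A"
  then obtain a b a' b' where x: "x = (\<lambda>\<sigma>. Delta l a \<sigma> + \<beta> \<sigma> * Delta l b \<sigma>)" "a \<in> A" "b \<in> A"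
    and y: "y = (\<lambda>\<sigma>. Delta l a' \<sigma> + \<beta> \<sigma> * Delta l b' \<sigma>)" "a' \<in> A" "b' \<in> A"
    by (elim XstepE)
  have "(\<lambda>\<sigma>. x \<sigma> + y \<sigma>)
      = (\<lambda>\<sigma>. Delta l (\<lambda>\<sigma>. a \<sigma> + a' \<sigma>) \<sigma> + \<beta> \<sigma> * Delta l (\<lambda>\<sigma>. b \<sigma> + b' \<sigma>) \<sigma>)"
    by (simp add: x y Delta_add algebra_simps)
  moreover have "(\<lambda>\<sigma>. a \<sigma> + a' \<sigma>) \<in> A" "(\<lambda>\<sigma>. b \<sigma> + b' \<sigma>) \<in> A"
    using A x y by (simp_all add: is_submodule_def)
  ultimately show "(\<lambda>\<sigma>. x \<sigma> + y \<sigma>) \<in> Xstep l \<beta> A"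
    unfolding Xstep_def by blast
next
  fix c x assume "x \<in> Xstep l \<beta> A"
  then obtain a b where x: "x = (\<lambda>\<sigma>. Delta l a \<sigma> + \<beta> \<sigma> * Delta l b \<sigma>)" "a \<in> A" "b \<in> A"
    by (rule XstepE)
  have "(\<lambda>\<sigma>. c * x \<sigma>) = (\<lambda>\<sigma>. Delta l (\<lambda>\<sigma>. c * a \<sigma>) \<sigma> + \<beta> \<sigma> * Delta l (\<lambda>\<sigma>. c * b \<sigma>) \<sigma>)"
    by (simp add: x Delta_mult algebra_simps)
  moreover have "(\<lambda>\<sigma>. c * a \<sigma>) \<in> A" "(\<lambda>\<sigma>. c * b \<sigma>) \<in> A"
    using A x by (simp_all add: is_submodule_def)
  ultimately show "(\<lambda>\<sigma>. c * x \<sigma>) \<in> Xstep l \<beta> A"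
    unfolding Xstep_def by blast
qed

lemma S_linear_Xstep_components:
  assumes A: "is_submodule A" and \<phi>: "S_linear (Xstep l \<beta> A) \<phi>"
  shows "S_linear A (\<lambda>a. c * \<phi> (Delta l a))"
    and "S_linear A (\<lambda>b. c * \<phi> (\<lambda>\<sigma>. \<beta> \<sigma> * Delta l b \<sigma>))"
proof -
  have add: "\<phi> (\<lambda>\<sigma>. x \<sigma> + y \<sigma>) = \<phi> x + \<phi> y" if "x \<in> Xstep l \<beta> A" "y \<in> Xstep l \<beta> A" for x y
    using \<phi> that by (simp add: S_linear_def)
  have scale: "\<phi> (\<lambda>\<sigma>. c' * x \<sigma>) = c' * \<phi> x" if "x \<in> Xstep l \<beta> A" for c' x
    using \<phi> that by (simp add: S_linear_def)
  show "S_linear A (\<lambda>a. c * \<phi> (Delta l a))"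
    unfolding S_linear_def
  proof (intro conjI ballI allI)
    fix a a' assume "a \<in> A" "a' \<in> A"
    then show "c * \<phi> (Delta l (\<lambda>\<sigma>. a \<sigma> + a' \<sigma>)) = c * \<phi> (Delta l a) + c * \<phi> (Delta l a')"
      using add[OF Delta_in_Xstep[OF A] Delta_in_Xstep[OF A]] by (simp add: Delta_add distrib_left)
  next
    fix c' a assume "a \<in> A"
    then show "c * \<phi> (Delta l (\<lambda>\<sigma>. c' * a \<sigma>)) = c' * (c * \<phi> (Delta l a))"
      using scale[OF Delta_in_Xstep[OF A]] by (simp add: Delta_mult mult.left_commute)
  qed
  show "S_linear A (\<lambda>b. c * \<phi> (\<lambda>\<sigma>. \<beta> \<sigma> * Delta l b \<sigma>))"
    unfolding S_linear_def
  proof (intro conjI ballI allI)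
    fix b b' assume "b \<in> A" "b' \<in> A"
    then show "c * \<phi> (\<lambda>\<sigma>. \<beta> \<sigma> * Delta l (\<lambda>\<sigma>. b \<sigma> + b' \<sigma>) \<sigma>)
        = c * \<phi> (\<lambda>\<sigma>. \<beta> \<sigma> * Delta l b \<sigma>) + c * \<phi> (\<lambda>\<sigma>. \<beta> \<sigma> * Delta l b' \<sigma>)"
      using add[OF mult_Delta_in_Xstep[OF A] mult_Delta_in_Xstep[OF A]]
      by (simp add: Delta_add distrib_left)
  next
    fix c' b assume "b \<in> A"
    then show "c * \<phi> (\<lambda>\<sigma>. \<beta> \<sigma> * Delta l (\<lambda>\<sigma>. c' * b \<sigma>) \<sigma>) = c' * (c * \<phi> (\<lambda>\<sigma>. \<beta> \<sigma> * Delta l b \<sigma>))"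
      using scale[OF mult_Delta_in_Xstep[OF A]] by (simp add: Delta_mult mult.left_commute)
  qed
qed

lemma supported_Xstep:
  assumes "\<forall>a\<in>A. supported n a" and "x \<in> Xstep (Suc n) \<beta> A"
  shows "supported (Suc n) x"
proof -
  obtain a b where x: "x = (\<lambda>\<sigma>. Delta (Suc n) a \<sigma> + \<beta> \<sigma> * Delta (Suc n) b \<sigma>)" "a \<in> A" "b \<in> A"
    using assms(2) by (rule XstepE)
  have "supported n a" "supported n b" using assms(1) x by auto
  then have "Delta (Suc n) a \<sigma> = 0" "Delta (Suc n) b \<sigma> = 0" if "\<sigma> \<notin> Iset (Suc n)" for \<sigma>
    using supported_Delta that by blast+
  then show ?thesis using x by (simp add: supported_def)
qed


lemma ghom_zero: "ghom M k (\<lambda>x. 0)"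
  by (simp add: ghom_def)

lemma ghom_add: "ghom M k \<phi> \<Longrightarrow> ghom M k \<psi> \<Longrightarrow> ghom M k (\<lambda>x. \<phi> x + \<psi> x)"
  by (simp add: ghom_def homog_add algebra_simps)

lemma gdualE:
  assumes "\<phi> \<in> gdual M"
  obtains F \<psi> where "finite F" "\<And>k. ghom M k (\<psi> k)" "\<phi> = (\<lambda>x. \<Sum>k\<in>F. \<psi> k x)"
proof -
  obtain F \<psi> where F: "finite F" "\<And>k. k \<in> F \<Longrightarrow> ghom M k (\<psi> k)" "\<phi> = (\<lambda>x. \<Sum>k\<in>F. \<psi> k x)"
    using assms unfolding gdual_def by blast
  define \<psi>' where "\<psi>' k = (if k \<in> F then \<psi> k else (\<lambda>x. 0))" for k
  have "ghom M k (\<psi>' k)" for k using F(2) by (cases "k \<in> F") (simp_all add: \<psi>'_def ghom_zero)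
  moreover have "\<phi> = (\<lambda>x. \<Sum>k\<in>F. \<psi>' k x)" using F(3) by (simp add: \<psi>'_def)
  ultimately show ?thesis using that F(1) by blast
qed

lemma gdual_S_linear:
  assumes "\<phi> \<in> gdual M"
  shows "S_linear M \<phi>"
proof -
  obtain F \<psi> where F: "finite F" "\<And>k. ghom M k (\<psi> k)" "\<phi> = (\<lambda>x. \<Sum>k\<in>F. \<psi> k x)"
    by (rule gdualE[OF assms]) blast
  show ?thesis
    unfolding S_linear_def F(3) using F(2)
    by (simp add: ghom_def sum.distrib sum_distrib_left)
qed

lemma gdual_add:
  assumes "\<phi>\<^sub>1 \<in> gdual M" "\<phi>\<^sub>2 \<in> gdual M"
  shows "(\<lambda>x. \<phi>\<^sub>1 x + \<phi>\<^sub>2 x) \<in> gdual M"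
proof -
  obtain F1 \<psi>1 where F1: "finite F1" "\<And>k. ghom M k (\<psi>1 k)" "\<phi>\<^sub>1 = (\<lambda>x. \<Sum>k\<in>F1. \<psi>1 k x)"
    by (rule gdualE[OF assms(1)]) blast
  obtain F2 \<psi>2 where F2: "finite F2" "\<And>k. ghom M k (\<psi>2 k)" "\<phi>\<^sub>2 = (\<lambda>x. \<Sum>k\<in>F2. \<psi>2 k x)"
    by (rule gdualE[OF assms(2)]) blast
  define \<psi> where "\<psi> k x = (if k \<in> F1 then \<psi>1 k x else 0) + (if k \<in> F2 then \<psi>2 k x else 0)" for k x
  have "ghom M k (\<lambda>x. if k \<in> F1 then \<psi>1 k x else 0)" for k
    using F1(2) ghom_zero by (cases "k \<in> F1") simp_all
  moreover have "ghom M k (\<lambda>x. if k \<in> F2 then \<psi>2 k x else 0)" for k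
    using F2(2) ghom_zero by (cases "k \<in> F2") simp_all
  ultimately have "ghom M k (\<psi> k)" for k
    unfolding \<psi>_def by (intro ghom_add)
  moreover have "(\<lambda>x. \<phi>\<^sub>1 x + \<phi>\<^sub>2 x) = (\<lambda>x. \<Sum>k\<in>F1 \<union> F2. \<psi> k x)"
  proof
    fix x
    have fin: "finite (F1 \<union> F2)" using F1(1) F2(1) by simp
    have "(\<Sum>k\<in>F1 \<union> F2. \<psi> k x)
        = (\<Sum>k\<in>(F1 \<union> F2) \<inter> F1. \<psi>1 k x) + (\<Sum>k\<in>(F1 \<union> F2) \<inter> F2. \<psi>2 k x)"
      unfolding \<psi>_def sum.distrib sum.inter_restrict[OF fin] ..
    then show "\<phi>\<^sub>1 x + \<phi>\<^sub>2 x = (\<Sum>k\<in>F1 \<union> F2. \<psi> k x)"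
      by (simp add: F1(3) F2(3) Int_absorb1)
  qed
  ultimately show ?thesis
    using F1(1) F2(1) unfolding gdual_def by (intro CollectI exI[of _ "F1 \<union> F2"] exI[of _ \<psi>]) simp
qed

definition graded_S_map :: "(nat list \<Rightarrow> ('n, 't::comm_ring_1) spoly) set \<Rightarrow> (nat list \<Rightarrow> ('n, 't) spoly) set
    \<Rightarrow> int \<Rightarrow> ((nat list \<Rightarrow> ('n, 't) spoly) \<Rightarrow> nat list \<Rightarrow> ('n, 't) spoly) \<Rightarrow> bool" where
  "graded_S_map M A d T \<longleftrightarrow> (\<forall>x\<in>M. T x \<in> A) \<and>
     (\<forall>x\<in>M. \<forall>y\<in>M. T (\<lambda>\<sigma>. x \<sigma> + y \<sigma>) = (\<lambda>\<sigma>. T x \<sigma> + T y \<sigma>)) \<and>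
     (\<forall>c. \<forall>x\<in>M. T (\<lambda>\<sigma>. c * x \<sigma>) = (\<lambda>\<sigma>. c * T x \<sigma>)) \<and>
     (\<forall>k. \<forall>x\<in>M. (\<forall>\<sigma>. homog k (x \<sigma>)) \<longrightarrow> (\<forall>\<sigma>. homog (k - d) (T x \<sigma>)))"

lemma ghom_pullback:
  assumes M: "is_submodule M" and T: "graded_S_map M A d T" and \<psi>: "ghom A (k + d) \<psi>"
  shows "ghom M k (\<lambda>x. if x \<in> M then \<psi> (T x) else 0)"
  unfolding ghom_def
proof (intro conjI ballI allI impI)
  fix x y assume x: "x \<in> M" and y: "y \<in> M"
  then have "(\<lambda>\<sigma>. x \<sigma> + y \<sigma>) \<in> M" using M by (simp add: is_submodule_def)
  moreover have "T x \<in> A" "T y \<in> A" using T x y by (simp_all add: graded_S_map_def)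
  then have "\<psi> (\<lambda>\<sigma>. T x \<sigma> + T y \<sigma>) = \<psi> (T x) + \<psi> (T y)"
    using \<psi>[unfolded ghom_def, THEN conjunct1] by blast
  ultimately show "(if (\<lambda>\<sigma>. x \<sigma> + y \<sigma>) \<in> M then \<psi> (T (\<lambda>\<sigma>. x \<sigma> + y \<sigma>)) else 0)
      = (if x \<in> M then \<psi> (T x) else 0) + (if y \<in> M then \<psi> (T y) else 0)"
    using x y T by (simp add: graded_S_map_def)
next
  fix c x assume x: "x \<in> M"
  then have "(\<lambda>\<sigma>. c * x \<sigma>) \<in> M" using M by (simp add: is_submodule_def)
  moreover have "T x \<in> A" using T x by (simp add: graded_S_map_def)
  then have "\<psi> (\<lambda>\<sigma>. c * T x \<sigma>) = c * \<psi> (T x)"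
    using \<psi>[unfolded ghom_def, THEN conjunct2, THEN conjunct1] by blast
  ultimately show "(if (\<lambda>\<sigma>. c * x \<sigma>) \<in> M then \<psi> (T (\<lambda>\<sigma>. c * x \<sigma>)) else 0)
      = c * (if x \<in> M then \<psi> (T x) else 0)"
    using x T by (simp add: graded_S_map_def)
next
  fix j x assume x: "x \<in> M" and "\<forall>\<sigma>. homog j (x \<sigma>)"
  then have "\<forall>\<sigma>. homog (j - d) (T x \<sigma>)" using T by (simp add: graded_S_map_def)
  then have "homog ((k + d) + (j - d)) (\<psi> (T x))"
    using \<psi> T x unfolding ghom_def graded_S_map_def by blast
  then show "homog (k + j) (if x \<in> M then \<psi> (T x) else 0)" using x by simp
qed simp

text \<open>The degree-\<open>k\<close> component of the pullback is the degree-\<open>(k + d)\<close> component of \<open>\<phi>\<close>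
  composed with \<open>T\<close>.\<close>
lemma gdual_pullback:
  assumes M: "is_submodule M" and T: "graded_S_map M A d T" and \<phi>: "\<phi> \<in> gdual A"
  shows "(\<lambda>x. if x \<in> M then \<phi> (T x) else 0) \<in> gdual M"
proof -
  obtain F \<psi> where F: "finite F" "\<And>k. ghom A k (\<psi> k)" "\<phi> = (\<lambda>x. \<Sum>k\<in>F. \<psi> k x)"
    by (rule gdualE[OF \<phi>]) blast
  define \<psi>' where "\<psi>' k x = (if x \<in> M then \<psi> (k + d) (T x) else 0)" for k x
  have "ghom M k (\<psi>' k)" for k
    unfolding \<psi>'_def by (rule ghom_pullback[OF M T F(2)])
  moreover have "(\<lambda>x. if x \<in> M then \<phi> (T x) else 0) = (\<lambda>x. \<Sum>k\<in>(\<lambda>k. k - d) ` F. \<psi>' k x)"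
  proof
    fix x
    have "(\<Sum>k\<in>(\<lambda>k. k - d) ` F. \<psi>' k x) = (\<Sum>k\<in>F. \<psi>' (k - d) x)"
      by (subst sum.reindex) (auto simp: inj_on_def)
    then show "(if x \<in> M then \<phi> (T x) else 0) = (\<Sum>k\<in>(\<lambda>k. k - d) ` F. \<psi>' k x)"
      by (simp add: F(3) \<psi>'_def)
  qed
  ultimately show ?thesis
    using F(1) unfolding gdual_def by (intro CollectI exI[of _ "(\<lambda>k. k - d) ` F"] exI[of _ \<psi>']) simp
qed

locale recursion_step =
  fixes n :: nat
    and \<beta> :: "nat list \<Rightarrow> ('n::{finite,linorder}, 't::idom) spoly"
    and h :: "('n, 't) spoly"
  assumes beta_snoc: "\<And>\<tau>. \<beta> (\<tau> @ [Suc n]) = - \<beta> \<tau>"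
    and beta_nonzero: "\<And>\<tau>. \<tau> \<in> Iset n \<Longrightarrow> \<beta> \<tau> \<noteq> 0"
    and homog_beta: "\<And>\<tau>. \<tau> \<in> Iset n \<Longrightarrow> homog 2 (\<beta> \<tau>)"
    and two_h: "2 * h = 1"
begin

lemma two_emb_h: "2 * emb h = 1"
  using two_h by (metis emb_1 emb_2 emb_mult)

lemma emb_beta_nonzero: "\<tau> \<in> Iset n \<Longrightarrow> emb (\<beta> \<tau>) \<noteq> 0"
  using beta_nonzero emb_eq_0_iff by blast

lemma pairing_Xstep:
  "(\<Sum>\<sigma>\<in>Iset (Suc n). emb (Delta (Suc n) a \<sigma> + \<beta> \<sigma> * Delta (Suc n) b \<sigma>) * z \<sigma>)
   = (\<Sum>\<tau>\<in>Iset n. emb (a \<tau>) * (z \<tau> + z (\<tau> @ [Suc n]))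
                 + emb (b \<tau>) * (emb (\<beta> \<tau>) * (z \<tau> - z (\<tau> @ [Suc n]))))"
  unfolding sum_Iset_Suc
  by (rule sum.cong[OF refl])
    (simp add: Delta_Iset Delta_snoc beta_snoc emb_add emb_diff emb_mult emb_uminus algebra_simps)

lemma Ystep_values:
  fixes a b :: "nat list \<Rightarrow> ('n, 't) spoly fract"
  assumes "\<tau> \<in> Iset n"
  defines "y \<equiv> (\<lambda>\<sigma>. Delta (Suc n) a \<sigma> + Delta (Suc n) b \<sigma> / emb (\<beta> \<sigma>))"
  shows "y \<tau> = a \<tau> + b \<tau> / emb (\<beta> \<tau>)"
    and "y (\<tau> @ [Suc n]) = a \<tau> - b \<tau> / emb (\<beta> \<tau>)"
    and "y \<tau> + y (\<tau> @ [Suc n]) = 2 * a \<tau>"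
    and "emb (\<beta> \<tau>) * (y \<tau> - y (\<tau> @ [Suc n])) = 2 * b \<tau>"
proof -
  show 1: "y \<tau> = a \<tau> + b \<tau> / emb (\<beta> \<tau>)" using assms by (simp add: y_def Delta_Iset)
  show 2: "y (\<tau> @ [Suc n]) = a \<tau> - b \<tau> / emb (\<beta> \<tau>)"
    by (simp add: y_def Delta_snoc beta_snoc emb_uminus)
  show "y \<tau> + y (\<tau> @ [Suc n]) = 2 * a \<tau>" unfolding 1 2 by simp
  show "emb (\<beta> \<tau>) * (y \<tau> - y (\<tau> @ [Suc n])) = 2 * b \<tau>"
    unfolding 1 2 using emb_beta_nonzero[OF assms(1)] by (simp add: field_simps)
qed

lemma pairing_Xstep_Ystep:
  fixes a' b' :: "nat list \<Rightarrow> ('n, 't) spoly fract"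
  shows "(\<Sum>\<sigma>\<in>Iset (Suc n). emb (Delta (Suc n) a \<sigma> + \<beta> \<sigma> * Delta (Suc n) b \<sigma>) *
            (Delta (Suc n) a' \<sigma> + Delta (Suc n) b' \<sigma> / emb (\<beta> \<sigma>)))
   = 2 * (\<Sum>\<tau>\<in>Iset n. emb (a \<tau>) * a' \<tau>) + 2 * (\<Sum>\<tau>\<in>Iset n. emb (b \<tau>) * b' \<tau>)"
proof -
  let ?y = "\<lambda>\<sigma>. Delta (Suc n) a' \<sigma> + Delta (Suc n) b' \<sigma> / emb (\<beta> \<sigma>)"
  have "(\<Sum>\<sigma>\<in>Iset (Suc n). emb (Delta (Suc n) a \<sigma> + \<beta> \<sigma> * Delta (Suc n) b \<sigma>) * ?y \<sigma>)
     = (\<Sum>\<tau>\<in>Iset n. emb (a \<tau>) * (?y \<tau> + ?y (\<tau> @ [Suc n]))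
                   + emb (b \<tau>) * (emb (\<beta> \<tau>) * (?y \<tau> - ?y (\<tau> @ [Suc n]))))"
    by (rule pairing_Xstep)
  also have "\<dots> = (\<Sum>\<tau>\<in>Iset n. emb (a \<tau>) * (2 * a' \<tau>) + emb (b \<tau>) * (2 * b' \<tau>))"
    by (rule sum.cong[OF refl]) (simp only: Ystep_values(3,4))
  finally show ?thesis by (simp add: sum.distrib sum_distrib_left algebra_simps)
qed

section \<open>The Y-module is the dual of the X-module\<close>

lemma Ystep_subset_Qdual:
  assumes B: "B = Qdual R n A"
    and Q_div: "\<And>\<tau> q. \<tau> \<in> Iset n \<Longrightarrow> q \<in> Qset R \<Longrightarrow> q / emb (\<beta> \<tau>) \<in> Qset R"
  shows "Ystep (Suc n) \<beta> B \<subseteq> Qdual R (Suc n) (Xstep (Suc n) \<beta> A)"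
proof
  fix y assume "y \<in> Ystep (Suc n) \<beta> B"
  then obtain a' b' where y: "y = (\<lambda>\<sigma>. Delta (Suc n) a' \<sigma> + Delta (Suc n) b' \<sigma> / emb (\<beta> \<sigma>))"
    and a': "a' \<in> Qdual R n A" and b': "b' \<in> Qdual R n A"
    unfolding B by (rule YstepE)
  have "supported n a'" "supported n b'" using a' b' by (simp_all add: Qdual_def)
  then have "supported (Suc n) y"
    using supported_Delta[of n a'] supported_Delta[of n b'] by (simp add: y supported_def)
  moreover have "y \<sigma> \<in> Qset R" for \<sigma>
  proof (cases "\<sigma> \<in> Iset (Suc n)")
    case True
    then show ?thesis
    proof (cases rule: Iset_Suc_cases)
      case 1
      then show ?thesis
        using a' b' Q_div[OF 1] Qset_add unfolding y Ystep_values(1)[OF 1] Qdual_def by blast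
    next
      case (2 \<tau>)
      then show ?thesis
        using a' b' Q_div[OF 2(1)] Qset_diff unfolding y 2(2) Ystep_values(2)[OF 2(1)] Qdual_def by blast
    qed
  next
    case False
    then show ?thesis using \<open>supported (Suc n) y\<close> Qset_0 by (simp add: supported_def)
  qed
  moreover have "(\<Sum>\<sigma>\<in>Iset (Suc n). y \<sigma> * emb (m \<sigma>)) \<in> Sset" if hm: "m \<in> Xstep (Suc n) \<beta> A" for m
  proof -
    obtain a b where m: "m = (\<lambda>\<sigma>. Delta (Suc n) a \<sigma> + \<beta> \<sigma> * Delta (Suc n) b \<sigma>)" "a \<in> A" "b \<in> A"
      using hm by (rule XstepE)
    have "(\<Sum>\<sigma>\<in>Iset (Suc n). y \<sigma> * emb (m \<sigma>))
        = emb 2 * (\<Sum>\<tau>\<in>Iset n. a' \<tau> * emb (a \<tau>)) + emb 2 * (\<Sum>\<tau>\<in>Iset n. b' \<tau> * emb (b \<tau>))"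
      using pairing_Xstep_Ystep[of a b a' b'] by (simp add: m y emb_2 mult.commute)
    then show ?thesis using a' b' m by (simp add: Qdual_def Sset_add Sset_mult)
  qed
  ultimately show "y \<in> Qdual R (Suc n) (Xstep (Suc n) \<beta> A)" unfolding Qdual_def by blast
qed

text \<open>These are the \<open>a'\<close> and \<open>b'\<close> with \<open>z = \<Delta>a' + \<Delta>b'/\<beta>\<close>.\<close>
lemma Qdual_Xstep_components:
  assumes A: "is_submodule A" and z: "z \<in> Qdual R (Suc n) (Xstep (Suc n) \<beta> A)"
  shows "(\<lambda>\<tau>. if \<tau> \<in> Iset n then emb h * (z \<tau> + z (\<tau> @ [Suc n])) else 0) \<in> Qdual R n A"
    and "(\<lambda>\<tau>. if \<tau> \<in> Iset n then emb h * (emb (\<beta> \<tau>) * (z \<tau> - z (\<tau> @ [Suc n]))) else 0) \<in> Qdual R n A"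
proof -
  have zQ: "\<And>\<sigma>. z \<sigma> \<in> Qset R"
    and zS: "\<And>m. m \<in> Xstep (Suc n) \<beta> A \<Longrightarrow> (\<Sum>\<sigma>\<in>Iset (Suc n). emb (m \<sigma>) * z \<sigma>) \<in> Sset"
    using z by (simp_all add: Qdual_def mult.commute)
  show "(\<lambda>\<tau>. if \<tau> \<in> Iset n then emb h * (z \<tau> + z (\<tau> @ [Suc n])) else 0) \<in> Qdual R n A"
    unfolding Qdual_def
  proof (intro CollectI conjI allI ballI)
    fix a assume a: "a \<in> A"
    have "(\<Sum>\<tau>\<in>Iset n. (if \<tau> \<in> Iset n then emb h * (z \<tau> + z (\<tau> @ [Suc n])) else 0) * emb (a \<tau>))
        = emb h * (\<Sum>\<sigma>\<in>Iset (Suc n). emb (Delta (Suc n) a \<sigma> + \<beta> \<sigma> * Delta (Suc n) (\<lambda>\<sigma>. 0) \<sigma>) * z \<sigma>)"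
      unfolding pairing_Xstep by (simp add: sum_distrib_left algebra_simps)
    then show "(\<Sum>\<tau>\<in>Iset n. (if \<tau> \<in> Iset n then emb h * (z \<tau> + z (\<tau> @ [Suc n])) else 0) * emb (a \<tau>)) \<in> Sset"
      using zS[OF Delta_in_Xstep[OF A a]] by (simp add: Sset_mult)
  qed (simp_all add: supported_def zQ Qset_0 Qset_mult Qset_emb Qset_add)
  show "(\<lambda>\<tau>. if \<tau> \<in> Iset n then emb h * (emb (\<beta> \<tau>) * (z \<tau> - z (\<tau> @ [Suc n]))) else 0) \<in> Qdual R n A"
    unfolding Qdual_def
  proof (intro CollectI conjI allI ballI)
    fix b assume b: "b \<in> A"
    have "(\<Sum>\<tau>\<in>Iset n. (if \<tau> \<in> Iset n then emb h * (emb (\<beta> \<tau>) * (z \<tau> - z (\<tau> @ [Suc n]))) else 0) * emb (b \<tau>))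
        = emb h * (\<Sum>\<sigma>\<in>Iset (Suc n). emb (Delta (Suc n) (\<lambda>\<sigma>. 0) \<sigma> + \<beta> \<sigma> * Delta (Suc n) b \<sigma>) * z \<sigma>)"
      unfolding pairing_Xstep by (simp add: sum_distrib_left algebra_simps)
    then show "(\<Sum>\<tau>\<in>Iset n. (if \<tau> \<in> Iset n then emb h * (emb (\<beta> \<tau>) * (z \<tau> - z (\<tau> @ [Suc n]))) else 0) * emb (b \<tau>)) \<in> Sset"
      using zS[OF mult_Delta_in_Xstep[OF A b]] by (simp add: Sset_mult)
  qed (simp_all add: supported_def zQ Qset_0 Qset_mult Qset_emb Qset_diff)
qed

lemma Qdual_subset_Ystep:
  assumes A: "is_submodule A" and B: "B = Qdual R n A"
  shows "Qdual R (Suc n) (Xstep (Suc n) \<beta> A) \<subseteq> Ystep (Suc n) \<beta> B"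
proof
  fix z assume z: "z \<in> Qdual R (Suc n) (Xstep (Suc n) \<beta> A)"
  define zp where "zp = (\<lambda>\<tau>. if \<tau> \<in> Iset n then emb h * (z \<tau> + z (\<tau> @ [Suc n])) else 0)"
  define zm where "zm = (\<lambda>\<tau>. if \<tau> \<in> Iset n then emb h * (emb (\<beta> \<tau>) * (z \<tau> - z (\<tau> @ [Suc n]))) else 0)"
  have "zp \<in> B" "zm \<in> B"
    unfolding B zp_def zm_def using Qdual_Xstep_components[OF A z] by blast+
  moreover have "z = (\<lambda>\<sigma>. Delta (Suc n) zp \<sigma> + Delta (Suc n) zm \<sigma> / emb (\<beta> \<sigma>))"
  proof (rule supported_eqI)
    show "supported (Suc n) z" using z by (simp add: Qdual_def)
    have "supported n zp" "supported n zm" by (simp_all add: supported_def zp_def zm_def)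
    then show "supported (Suc n) (\<lambda>\<sigma>. Delta (Suc n) zp \<sigma> + Delta (Suc n) zm \<sigma> / emb (\<beta> \<sigma>))"
      using supported_Delta[of n zp] supported_Delta[of n zm] by (simp add: supported_def)
  next
    fix \<sigma> assume "\<sigma> \<in> Iset (Suc n)"
    then show "z \<sigma> = Delta (Suc n) zp \<sigma> + Delta (Suc n) zm \<sigma> / emb (\<beta> \<sigma>)"
    proof (cases rule: Iset_Suc_cases)
      case 1
      have "Delta (Suc n) zp \<sigma> + Delta (Suc n) zm \<sigma> / emb (\<beta> \<sigma>) = (2 * emb h) * z \<sigma>"
        using 1 emb_beta_nonzero[OF 1] by (simp add: Delta_Iset zp_def zm_def field_simps)
      then show ?thesis by (simp add: two_emb_h)
    next
      case (2 \<tau>)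
      have "Delta (Suc n) zp \<sigma> + Delta (Suc n) zm \<sigma> / emb (\<beta> \<sigma>) = (2 * emb h) * z \<sigma>"
        using 2 emb_beta_nonzero[OF 2(1)]
        by (simp add: Delta_snoc beta_snoc emb_uminus zp_def zm_def field_simps)
      then show ?thesis by (simp add: two_emb_h)
    qed
  qed
  ultimately show "z \<in> Ystep (Suc n) \<beta> B" unfolding Ystep_def by blast
qed

lemma Ystep_eq_Qdual:
  assumes "is_submodule A" "B = Qdual R n A"
    and "\<And>\<tau> q. \<tau> \<in> Iset n \<Longrightarrow> q \<in> Qset R \<Longrightarrow> q / emb (\<beta> \<tau>) \<in> Qset R"
  shows "Ystep (Suc n) \<beta> B = Qdual R (Suc n) (Xstep (Suc n) \<beta> A)"
  using Ystep_subset_Qdual[OF assms(2,3)] Qdual_subset_Ystep[OF assms(1,2)] by (rule antisym)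

end

section \<open>Functionals on the X-module are pairings with the Y-module\<close>

context recursion_step
begin

lemma S_linear_represented_Xstep:
  assumes A: "is_submodule A"
    and IH: "\<And>\<psi>. S_linear A \<psi> \<Longrightarrow> \<exists>y\<in>B. represents n A \<psi> y"
    and \<phi>: "S_linear (Xstep (Suc n) \<beta> A) \<phi>"
  shows "\<exists>y\<in>Ystep (Suc n) \<beta> B. represents (Suc n) (Xstep (Suc n) \<beta> A) \<phi> y"
proof -
  let ?M = "Xstep (Suc n) \<beta> A"
  obtain y1 where y1: "y1 \<in> B" "represents n A (\<lambda>a. h * \<phi> (Delta (Suc n) a)) y1"
    using IH S_linear_Xstep_components(1)[OF A \<phi>] by blast
  obtain y2 where y2: "y2 \<in> B" "represents n A (\<lambda>b. h * \<phi> (\<lambda>\<sigma>. \<beta> \<sigma> * Delta (Suc n) b \<sigma>)) y2"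
    using IH S_linear_Xstep_components(2)[OF A \<phi>] by blast
  define y where "y = (\<lambda>\<sigma>. Delta (Suc n) y1 \<sigma> + Delta (Suc n) y2 \<sigma> / emb (\<beta> \<sigma>))"
  have "y \<in> Ystep (Suc n) \<beta> B" unfolding y_def Ystep_def using y1(1) y2(1) by blast
  moreover have "represents (Suc n) ?M \<phi> y"
    unfolding represents_def
  proof
    fix x assume "x \<in> ?M"
    then obtain a b where x: "x = (\<lambda>\<sigma>. Delta (Suc n) a \<sigma> + \<beta> \<sigma> * Delta (Suc n) b \<sigma>)" "a \<in> A" "b \<in> A"
      by (rule XstepE)
    have "\<phi> x = \<phi> (Delta (Suc n) a) + \<phi> (\<lambda>\<sigma>. \<beta> \<sigma> * Delta (Suc n) b \<sigma>)"
      using \<phi> Delta_in_Xstep[OF A x(2)] mult_Delta_in_Xstep[OF A x(3)] by (simp add: x S_linear_def)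
    also have "\<dots> = 2 * (h * \<phi> (Delta (Suc n) a)) + 2 * (h * \<phi> (\<lambda>\<sigma>. \<beta> \<sigma> * Delta (Suc n) b \<sigma>))"
      by (simp add: mult.assoc[symmetric] two_h)
    finally have "emb (\<phi> x) = 2 * (\<Sum>\<tau>\<in>Iset n. emb (a \<tau>) * y1 \<tau>) + 2 * (\<Sum>\<tau>\<in>Iset n. emb (b \<tau>) * y2 \<tau>)"
      using y1(2) y2(2) x by (simp add: represents_def emb_add emb_mult emb_2)
    also have "\<dots> = (\<Sum>\<sigma>\<in>Iset (Suc n). emb (x \<sigma>) * y \<sigma>)"
      unfolding x y_def by (rule pairing_Xstep_Ystep[symmetric])
    finally show "emb (\<phi> x) = (\<Sum>\<sigma>\<in>Iset (Suc n). emb (x \<sigma>) * y \<sigma>)" .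
  qed
  ultimately show ?thesis by blast
qed

lemma pairing_nondegenerate_Xstep:
  assumes A: "is_submodule A" and IH: "pairing_nondegenerate n A"
  shows "pairing_nondegenerate (Suc n) (Xstep (Suc n) \<beta> A)"
  unfolding pairing_nondegenerate_def
proof (intro allI impI ballI)
  fix w :: "nat list \<Rightarrow> ('n, 't) spoly fract" and \<sigma>
  assume w: "\<forall>x\<in>Xstep (Suc n) \<beta> A. (\<Sum>\<sigma>\<in>Iset (Suc n). emb (x \<sigma>) * w \<sigma>) = 0"
    and \<sigma>: "\<sigma> \<in> Iset (Suc n)"
  have "(\<Sum>\<tau>\<in>Iset n. emb (a \<tau>) * (w \<tau> + w (\<tau> @ [Suc n]))) = 0" if "a \<in> A" for a
  proof -
    have "(\<Sum>\<sigma>\<in>Iset (Suc n). emb (Delta (Suc n) a \<sigma>) * w \<sigma>) = 0"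
      using w[rule_format, OF Delta_in_Xstep[OF A that, of "Suc n" \<beta>]] by simp
    then show ?thesis using pairing_Xstep[of a "\<lambda>\<sigma>. 0" w] by simp
  qed
  then have sum0: "\<forall>\<tau>\<in>Iset n. w \<tau> + w (\<tau> @ [Suc n]) = 0"
    using IH[unfolded pairing_nondegenerate_def, rule_format, of "\<lambda>\<tau>. w \<tau> + w (\<tau> @ [Suc n])"]
    by blast
  have "(\<Sum>\<tau>\<in>Iset n. emb (b \<tau>) * (emb (\<beta> \<tau>) * (w \<tau> - w (\<tau> @ [Suc n])))) = 0" if "b \<in> A" for b
  proof -
    have "(\<Sum>\<sigma>\<in>Iset (Suc n). emb (\<beta> \<sigma> * Delta (Suc n) b \<sigma>) * w \<sigma>) = 0"
      using w[rule_format, OF mult_Delta_in_Xstep[OF A that, of \<beta> "Suc n"]] by simp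
    then show ?thesis using pairing_Xstep[of "\<lambda>\<sigma>. 0" b w] by simp
  qed
  then have "\<forall>\<tau>\<in>Iset n. emb (\<beta> \<tau>) * (w \<tau> - w (\<tau> @ [Suc n])) = 0"
    using IH[unfolded pairing_nondegenerate_def, rule_format,
        of "\<lambda>\<tau>. emb (\<beta> \<tau>) * (w \<tau> - w (\<tau> @ [Suc n]))"]
    by blast
  then have diff0: "\<forall>\<tau>\<in>Iset n. w \<tau> = w (\<tau> @ [Suc n])"
    using emb_beta_nonzero by simp
  have "w \<tau> = 0 \<and> w (\<tau> @ [Suc n]) = 0" if "\<tau> \<in> Iset n" for \<tau>
  proof -
    have "w \<tau> = (2 * emb h) * w \<tau>" by (simp add: two_emb_h)
    also have "\<dots> = emb h * (w \<tau> + w (\<tau> @ [Suc n]))" using diff0 that by (simp add: algebra_simps)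
    also have "\<dots> = 0" using sum0 that by simp
    finally show ?thesis using diff0 that by simp
  qed
  with \<sigma> show "w \<sigma> = 0" by (cases rule: Iset_Suc_cases) auto
qed

text \<open>Left inverses of the step on the X-module: \<open>x = \<Delta>a + \<beta>\<Delta>b\<close> is sent to \<open>2a\<close> and \<open>2b\<close>.\<close>
definition even_part :: "(nat list \<Rightarrow> ('n, 't) spoly) \<Rightarrow> nat list \<Rightarrow> ('n, 't) spoly" where
  "even_part x = (\<lambda>\<tau>. if \<tau> \<in> Iset n then x \<tau> + x (\<tau> @ [Suc n]) else 0)"

definition odd_quotient :: "(nat list \<Rightarrow> ('n, 't) spoly) \<Rightarrow> nat list \<Rightarrow> ('n, 't) spoly" where
  "odd_quotient x = (\<lambda>\<tau>. if \<tau> \<in> Iset n then (SOME c. \<beta> \<tau> * c = x \<tau> - x (\<tau> @ [Suc n])) else 0)"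

lemma Xstep_parts:
  assumes "supported n a" "supported n b"
    and x: "x = (\<lambda>\<sigma>. Delta (Suc n) a \<sigma> + \<beta> \<sigma> * Delta (Suc n) b \<sigma>)"
  shows "even_part x = (\<lambda>\<tau>. a \<tau> + a \<tau>)"
    and "odd_quotient x = (\<lambda>\<tau>. b \<tau> + b \<tau>)"
proof -
  have xv: "x \<tau> = a \<tau> + \<beta> \<tau> * b \<tau>" "x (\<tau> @ [Suc n]) = a \<tau> - \<beta> \<tau> * b \<tau>" if "\<tau> \<in> Iset n" for \<tau>
    using that by (simp_all add: x Delta_Iset Delta_snoc beta_snoc)
  show "even_part x = (\<lambda>\<tau>. a \<tau> + a \<tau>)"
    using assms(1) by (auto simp: even_part_def xv supported_def)
  have "odd_quotient x \<tau> = b \<tau> + b \<tau>" if \<tau>: "\<tau> \<in> Iset n" for \<tau>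
  proof -
    have ex: "\<beta> \<tau> * (b \<tau> + b \<tau>) = x \<tau> - x (\<tau> @ [Suc n])"
      unfolding xv[OF \<tau>] by (simp add: algebra_simps)
    then have "\<beta> \<tau> * odd_quotient x \<tau> = \<beta> \<tau> * (b \<tau> + b \<tau>)"
      using someI[of "\<lambda>c. \<beta> \<tau> * c = x \<tau> - x (\<tau> @ [Suc n])"] \<tau> by (simp add: odd_quotient_def)
    then show ?thesis using beta_nonzero[OF \<tau>] by simp
  qed
  then show "odd_quotient x = (\<lambda>\<tau>. b \<tau> + b \<tau>)"
    using assms(2) by (auto simp: odd_quotient_def supported_def)
qed

lemma odd_quotient_mult_beta:
  assumes "\<forall>a\<in>A. supported n a" "x \<in> Xstep (Suc n) \<beta> A" "\<tau> \<in> Iset n"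
  shows "\<beta> \<tau> * odd_quotient x \<tau> = x \<tau> - x (\<tau> @ [Suc n])"
proof -
  obtain a b where x: "x = (\<lambda>\<sigma>. Delta (Suc n) a \<sigma> + \<beta> \<sigma> * Delta (Suc n) b \<sigma>)" "a \<in> A" "b \<in> A"
    using assms(2) by (rule XstepE)
  show ?thesis
    using Xstep_parts(2)[OF _ _ x(1)] assms(1,3) x by (simp add: Delta_Iset Delta_snoc beta_snoc algebra_simps)
qed

lemma Xstep_parts_in:
  assumes A: "is_submodule A" "\<forall>a\<in>A. supported n a" and x: "x \<in> Xstep (Suc n) \<beta> A"
  shows "even_part x \<in> A" "odd_quotient x \<in> A"
proof -
  obtain a b where x: "x = (\<lambda>\<sigma>. Delta (Suc n) a \<sigma> + \<beta> \<sigma> * Delta (Suc n) b \<sigma>)" "a \<in> A" "b \<in> A"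
    using x by (rule XstepE)
  then show "even_part x \<in> A" "odd_quotient x \<in> A"
    using A Xstep_parts[OF _ _ x(1)] by (simp_all add: is_submodule_def)
qed

lemma odd_quotient_eqI:
  assumes "\<And>\<tau>. \<tau> \<in> Iset n \<Longrightarrow> \<beta> \<tau> * q \<tau> = \<beta> \<tau> * q' \<tau>" "supported n q" "supported n q'"
  shows "q = q'"
  using assms beta_nonzero by (intro supported_eqI) auto

lemma graded_S_map_even_part:
  assumes "is_submodule A" "\<forall>a\<in>A. supported n a"
  shows "graded_S_map (Xstep (Suc n) \<beta> A) A 0 even_part"
  using Xstep_parts_in[OF assms]
  by (auto simp: graded_S_map_def even_part_def fun_eq_iff algebra_simps homog_add)

lemma graded_S_map_odd_quotient:
  assumes A: "is_submodule A" "\<forall>a\<in>A. supported n a"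
  shows "graded_S_map (Xstep (Suc n) \<beta> A) A 2 odd_quotient"
  unfolding graded_S_map_def
proof (intro conjI ballI allI impI)
  let ?M = "Xstep (Suc n) \<beta> A"
  have M: "is_submodule ?M" by (rule is_submodule_Xstep[OF A(1)])
  have supp: "supported n (odd_quotient x)" for x by (simp add: supported_def odd_quotient_def)
  show "odd_quotient x \<in> A" if "x \<in> ?M" for x using Xstep_parts_in[OF A that] by simp
  show "odd_quotient (\<lambda>\<sigma>. x \<sigma> + y \<sigma>) = (\<lambda>\<sigma>. odd_quotient x \<sigma> + odd_quotient y \<sigma>)"
    if x: "x \<in> ?M" and y: "y \<in> ?M" for x y
  proof (rule odd_quotient_eqI)
    have xy: "(\<lambda>\<sigma>. x \<sigma> + y \<sigma>) \<in> ?M" using M x y by (simp add: is_submodule_def)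
    fix \<tau> assume \<tau>: "\<tau> \<in> Iset n"
    show "\<beta> \<tau> * odd_quotient (\<lambda>\<sigma>. x \<sigma> + y \<sigma>) \<tau> = \<beta> \<tau> * (odd_quotient x \<tau> + odd_quotient y \<tau>)"
      unfolding distrib_left odd_quotient_mult_beta[OF A(2) xy \<tau>]
        odd_quotient_mult_beta[OF A(2) x \<tau>] odd_quotient_mult_beta[OF A(2) y \<tau>]
      by simp
  qed (use supp in \<open>auto simp: supported_def\<close>)
  show "odd_quotient (\<lambda>\<sigma>. c * x \<sigma>) = (\<lambda>\<sigma>. c * odd_quotient x \<sigma>)" if x: "x \<in> ?M" for c x
  proof (rule odd_quotient_eqI)
    have cx: "(\<lambda>\<sigma>. c * x \<sigma>) \<in> ?M" using M x by (simp add: is_submodule_def)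
    fix \<tau> assume \<tau>: "\<tau> \<in> Iset n"
    show "\<beta> \<tau> * odd_quotient (\<lambda>\<sigma>. c * x \<sigma>) \<tau> = \<beta> \<tau> * (c * odd_quotient x \<tau>)"
      unfolding mult.left_commute[of "\<beta> \<tau>" c] odd_quotient_mult_beta[OF A(2) cx \<tau>]
        odd_quotient_mult_beta[OF A(2) x \<tau>]
      by (simp add: right_diff_distrib)
  qed (use supp in \<open>auto simp: supported_def\<close>)
  fix k x assume x: "x \<in> ?M" and hx: "\<forall>\<sigma>. homog k (x \<sigma>)"
  show "homog (k - 2) (odd_quotient x \<tau>)" for \<tau>
  proof (cases "\<tau> \<in> Iset n")
    case True
    have "homog k (\<beta> \<tau> * odd_quotient x \<tau>)"
      using hx odd_quotient_mult_beta[OF A(2) x True] by (simp add: homog_diff)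
    then show ?thesis by (rule homog_cancel_left[OF homog_beta[OF True] beta_nonzero[OF True]])
  qed (simp add: odd_quotient_def)
qed

lemma gdual_represented_Xstep:
  assumes A: "is_submodule A" "\<forall>a\<in>A. supported n a"
    and IH: "\<And>y. y \<in> B \<Longrightarrow> \<exists>\<phi>\<in>gdual A. represents n A \<phi> y"
    and y: "y \<in> Ystep (Suc n) \<beta> B"
  shows "\<exists>\<phi>\<in>gdual (Xstep (Suc n) \<beta> A). represents (Suc n) (Xstep (Suc n) \<beta> A) \<phi> y"
proof -
  let ?M = "Xstep (Suc n) \<beta> A"
  obtain a' b' where y': "y = (\<lambda>\<sigma>. Delta (Suc n) a' \<sigma> + Delta (Suc n) b' \<sigma> / emb (\<beta> \<sigma>))" "a' \<in> B" "b' \<in> B"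
    using y by (rule YstepE)
  obtain \<phi>a \<phi>b where \<phi>a: "\<phi>a \<in> gdual A" "represents n A \<phi>a a'"
    and \<phi>b: "\<phi>b \<in> gdual A" "represents n A \<phi>b b'"
    using IH y'(2,3) by meson
  have M: "is_submodule ?M" by (rule is_submodule_Xstep[OF A(1)])
  have "(\<lambda>x. if x \<in> ?M then \<phi>a (even_part x) else 0) \<in> gdual ?M"
    by (rule gdual_pullback[OF M graded_S_map_even_part[OF A] \<phi>a(1)])
  moreover have "(\<lambda>x. if x \<in> ?M then \<phi>b (odd_quotient x) else 0) \<in> gdual ?M"
    by (rule gdual_pullback[OF M graded_S_map_odd_quotient[OF A] \<phi>b(1)])
  ultimately have "(\<lambda>x. (if x \<in> ?M then \<phi>a (even_part x) else 0) + (if x \<in> ?M then \<phi>b (odd_quotient x) else 0))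
      \<in> gdual ?M" by (rule gdual_add)
  moreover have "represents (Suc n) ?M
      (\<lambda>x. (if x \<in> ?M then \<phi>a (even_part x) else 0) + (if x \<in> ?M then \<phi>b (odd_quotient x) else 0)) y"
    unfolding represents_def
  proof
    fix x assume xM: "x \<in> ?M"
    then obtain a b where x: "x = (\<lambda>\<sigma>. Delta (Suc n) a \<sigma> + \<beta> \<sigma> * Delta (Suc n) b \<sigma>)" "a \<in> A" "b \<in> A"
      by (rule XstepE)
    have "supported n a" "supported n b" using A(2) x(2,3) by auto
    note parts = Xstep_parts[OF this x(1)]
    have "emb (\<phi>a (even_part x)) + emb (\<phi>b (odd_quotient x))
        = (\<Sum>\<tau>\<in>Iset n. emb (even_part x \<tau>) * a' \<tau>) + (\<Sum>\<tau>\<in>Iset n. emb (odd_quotient x \<tau>) * b' \<tau>)"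
      using \<phi>a(2) \<phi>b(2) Xstep_parts_in[OF A xM] by (simp add: represents_def)
    also have "\<dots> = 2 * (\<Sum>\<tau>\<in>Iset n. emb (a \<tau>) * a' \<tau>) + 2 * (\<Sum>\<tau>\<in>Iset n. emb (b \<tau>) * b' \<tau>)"
      unfolding parts by (simp only: emb_add) (simp add: sum_distrib_left algebra_simps mult_2 sum.distrib)
    also have "\<dots> = (\<Sum>\<sigma>\<in>Iset (Suc n). emb (x \<sigma>) * y \<sigma>)"
      unfolding x y' by (rule pairing_Xstep_Ystep[symmetric])
    finally show "emb ((if x \<in> ?M then \<phi>a (even_part x) else 0) + (if x \<in> ?M then \<phi>b (odd_quotient x) else 0))
        = (\<Sum>\<sigma>\<in>Iset (Suc n). emb (x \<sigma>) * y \<sigma>)"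
      using xM by (simp add: emb_add)
  qed
  ultimately show ?thesis by blast
qed

end

lemma is_submodule_XR_Nil: "is_submodule (XR cor [])"
  by (simp add: is_submodule_def)

lemma Qdual_XR_Nil:
  "(YR cor [] :: (nat list \<Rightarrow> ('n::{finite,linorder}, 't::idom) spoly fract) set) = Qdual R 0 (XR cor [])"
proof
  let ?X = "XR cor [] :: (nat list \<Rightarrow> ('n, 't) spoly) set"
  show "YR cor [] \<subseteq> Qdual R 0 ?X"
  proof
    fix y :: "nat list \<Rightarrow> ('n, 't) spoly fract" assume y: "y \<in> YR cor []"
    then obtain c where c: "y [] = emb c" by (auto simp: Sset_def)
    have "y \<sigma> \<in> Qset R" for \<sigma> using y c Qset_emb Qset_0 by (cases "\<sigma> = []") auto
    moreover have "supported 0 y" using y by (simp add: supported_def Iset_0)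
    moreover have "(\<Sum>\<sigma>\<in>Iset 0. y \<sigma> * emb (m \<sigma>)) \<in> Sset" for m
      by (simp add: Iset_0 c Sset_mult)
    ultimately show "y \<in> Qdual R 0 ?X" by (simp add: Qdual_def)
  qed
  show "Qdual R 0 ?X \<subseteq> YR cor []"
  proof
    fix z assume z: "z \<in> Qdual R 0 ?X"
    have e: "(\<lambda>\<sigma>. if \<sigma> = [] then 1 else 0) \<in> ?X" by simp
    have "\<forall>m\<in>?X. (\<Sum>\<sigma>\<in>Iset 0. z \<sigma> * emb (m \<sigma>)) \<in> Sset"
      using z unfolding Qdual_def by blast
    from this[rule_format, OF e] show "z \<in> YR cor []" using z by (simp add: Qdual_def supported_def Iset_0)
  qed
qed

text \<open>For \<open>y [] = emb c\<close> the functional \<open>x \<mapsto> c x\<^sub>[\<^sub>]\<close> is graded via the homogeneous parts of \<open>c\<close>.\<close>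
lemma gdual_represents_YR_Nil:
  fixes y :: "nat list \<Rightarrow> ('n::{finite,linorder}, 't::idom) spoly fract"
  assumes "y \<in> YR cor []"
  shows "\<exists>\<phi>\<in>gdual (XR cor []). represents 0 (XR cor []) \<phi> y"
proof -
  let ?X = "XR cor [] :: (nat list \<Rightarrow> ('n, 't) spoly) set"
  obtain c where c: "y [] = emb c" using assms by (auto simp: Sset_def)
  define F where "F = (\<lambda>m. 2 * int (deg m)) ` Poly_Mapping.keys c"
  define \<psi> where "\<psi> k x = (if x \<in> ?X then homog_part k c * x [] else 0)" for k x
  have "ghom ?X k (\<psi> k)" for k
    unfolding ghom_def
  proof (intro conjI ballI allI impI)
    fix x y assume "x \<in> ?X" "y \<in> ?X"
    then show "\<psi> k (\<lambda>\<sigma>. x \<sigma> + y \<sigma>) = \<psi> k x + \<psi> k y" by (simp add: \<psi>_def distrib_left)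
  next
    fix a x assume "x \<in> ?X"
    then show "\<psi> k (\<lambda>\<sigma>. a * x \<sigma>) = a * \<psi> k x" by (simp add: \<psi>_def mult.left_commute)
  next
    fix j x assume "x \<in> ?X" "\<forall>\<sigma>. homog j (x \<sigma>)"
    then show "homog (k + j) (\<psi> k x)" by (simp add: \<psi>_def homog_mult homog_homog_part)
  next
    fix x assume "x \<notin> ?X"
    then show "\<psi> k x = 0" unfolding \<psi>_def by (rule if_not_P)
  qed
  moreover have "(\<lambda>x. \<Sum>k\<in>F. \<psi> k x) = (\<lambda>x. if x \<in> ?X then c * x [] else 0)"
  proof
    fix x :: "nat list \<Rightarrow> ('n, 't) spoly"
    have "(\<Sum>k\<in>F. homog_part k c * x []) = c * x []"
      unfolding F_def sum_distrib_right[symmetric] sum_homog_parts ..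
    then show "(\<Sum>k\<in>F. \<psi> k x) = (if x \<in> ?X then c * x [] else 0)"
      by (cases "x \<in> ?X") (simp_all only: \<psi>_def if_True if_False sum.neutral_const)
  qed
  ultimately have "(\<lambda>x. if x \<in> ?X then c * x [] else 0) \<in> gdual ?X"
    unfolding gdual_def F_def by (intro CollectI exI[of _ F] exI[of _ \<psi>]) (simp add: F_def)
  moreover have "represents 0 ?X (\<lambda>x. if x \<in> ?X then c * x [] else 0) y"
    by (simp add: represents_def Iset_0 c emb_mult mult.commute)
  ultimately show ?thesis by blast
qed

lemma S_linear_represented_XR_Nil:
  fixes \<phi> :: "(nat list \<Rightarrow> ('n::{finite,linorder}, 't::idom) spoly) \<Rightarrow> ('n, 't) spoly"
  assumes "S_linear (XR cor []) \<phi>"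
  shows "\<exists>y\<in>YR cor []. represents 0 (XR cor []) \<phi> y"
proof -
  define e :: "nat list \<Rightarrow> ('n, 't) spoly" where "e = (\<lambda>\<sigma>. if \<sigma> = [] then 1 else 0)"
  have "\<phi> x = x [] * \<phi> e" if "x \<in> XR cor []" for x
  proof -
    have "x = (\<lambda>\<sigma>. x [] * e \<sigma>)" using that by (auto simp: e_def fun_eq_iff)
    moreover have "\<phi> (\<lambda>\<sigma>. x [] * e \<sigma>) = x [] * \<phi> e"
      using assms by (simp add: S_linear_def e_def)
    ultimately show ?thesis by simp
  qed
  then have "represents 0 (XR cor []) \<phi> (\<lambda>\<sigma>. if \<sigma> = [] then emb (\<phi> e) else 0)"
    by (simp add: represents_def Iset_0 emb_mult)
  moreover have "(\<lambda>\<sigma>. if \<sigma> = [] then emb (\<phi> e) else 0) \<in> YR cor []" by simp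
  ultimately show ?thesis by blast
qed

lemma pairing_nondegenerate_XR_Nil:
  "pairing_nondegenerate 0 (XR cor [] :: (nat list \<Rightarrow> ('n::{finite,linorder}, 't::idom) spoly) set)"
  unfolding pairing_nondegenerate_def
proof (intro allI impI ballI)
  fix w :: "nat list \<Rightarrow> ('n, 't) spoly fract" and \<sigma>
  assume w: "\<forall>x\<in>XR cor []. (\<Sum>\<sigma>\<in>Iset 0. emb (x \<sigma>) * w \<sigma>) = 0" and "\<sigma> \<in> Iset 0"
  have "(\<lambda>\<sigma>. if \<sigma> = [] then 1 else 0) \<in> (XR cor [] :: (nat list \<Rightarrow> ('n, 't) spoly) set)" by simp
  from w[rule_format, OF this] show "w \<sigma> = 0" using \<open>\<sigma> \<in> Iset 0\<close> by (simp add: Iset_0)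
qed

section \<open>Induction along the sequence\<close>

context affine_root_datum
begin

lemma XR_Cons: "XR cor (t # rs) = Xstep (Suc (length rs)) (root_factor t rs) (XR cor rs)"
  by (simp add: Xstep_def root_factor_def)

lemma YR_Cons: "YR cor (t # rs) = Ystep (Suc (length rs)) (root_factor t rs) (YR cor rs)"
  by (simp add: Ystep_def root_factor_def)

lemma is_submodule_XR: "is_submodule (XR cor rs)"
  by (induction rs) (simp_all only: is_submodule_XR_Nil XR_Cons is_submodule_Xstep)

lemma supported_XR:
  fixes x :: "nat list \<Rightarrow> ('n, 't::idom) spoly"
  shows "x \<in> XR cor rs \<Longrightarrow> supported (length rs) x"
proof (induction rs arbitrary: x)
  case Nil
  then show ?case by (simp add: supported_def Iset_0)
next
  case (Cons t rs)
  have "\<forall>a\<in>XR cor rs. supported (length rs) (a :: nat list \<Rightarrow> ('n, 't) spoly)" using Cons.IH by blast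
  from supported_Xstep[OF this Cons.prems[unfolded XR_Cons]] show ?case by simp
qed

end

locale affine_setting = affine_root_datum R cor P g
  for R :: "((int, 'n::{finite,linorder}) vec) set" and cor P g +
  fixes h :: "('n, 't::idom) spoly"
  assumes two_h: "2 * h = 1"
    and tensT_nonzero: "\<forall>x\<in>affine_roots R. \<exists>j. (tensT x j :: 't) \<noteq> 0"
begin

abbreviation Xs :: "(((int, 'n) vec) \<times> int) list \<Rightarrow> (nat list \<Rightarrow> ('n, 't) spoly) set" where
  "Xs rs \<equiv> XR cor rs"

abbreviation Ys :: "(((int, 'n) vec) \<times> int) list \<Rightarrow> (nat list \<Rightarrow> ('n, 't) spoly fract) set" where
  "Ys rs \<equiv> YR cor rs"

lemma recursion_step_root_factor:
  assumes "t \<in> Shat P g" "set rs \<subseteq> Shat P g"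
  shows "recursion_step (length rs) (root_factor t rs :: nat list \<Rightarrow> ('n, 't) spoly) h"
proof
  show "root_factor t rs (\<tau> @ [Suc (length rs)]) = - root_factor t rs \<tau>" for \<tau>
    by (rule root_factor_snoc[OF assms(1)])
  show "(root_factor t rs \<tau> :: ('n, 't) spoly) \<noteq> 0" if "\<tau> \<in> Iset (length rs)" for \<tau>
    using tensT_nonzero ev_sroot_affine_root[OF assms that] linX_nonzero
    unfolding root_factor_def by blast
  show "homog 2 (root_factor t rs \<tau> :: ('n, 't) spoly)" for \<tau>
    unfolding root_factor_def by (rule homog_linX)
  show "2 * h = 1" by (rule two_h)
qed

lemma YR_eq_Qdual: "set rs \<subseteq> Shat P g \<Longrightarrow> Ys rs = Qdual R (length rs) (Xs rs)"
proof (induction rs)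
  case Nil
  show ?case by (simp only: Qdual_XR_Nil list.size)
next
  case (Cons t rs)
  interpret recursion_step "length rs" "root_factor t rs" h
    using Cons.prems by (intro recursion_step_root_factor) auto
  have "q / emb (root_factor t rs \<tau>) \<in> Qset R" if "\<tau> \<in> Iset (length rs)" "q \<in> Qset R" for \<tau> q
    using Cons.prems Qset_divide_linX[OF that(2) ev_sroot_affine_root[OF _ _ that(1)]]
    unfolding root_factor_def by simp
  moreover have "Ys rs = Qdual R (length rs) (Xs rs)" using Cons by simp
  ultimately show ?case
    unfolding XR_Cons YR_Cons length_Cons by (intro Ystep_eq_Qdual is_submodule_XR)
qed

lemma gdual_represents_YR:
  "set rs \<subseteq> Shat P g \<Longrightarrow> y \<in> Ys rs \<Longrightarrow> \<exists>\<phi>\<in>gdual (Xs rs). represents (length rs) (Xs rs) \<phi> y"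
proof (induction rs arbitrary: y)
  case Nil
  then show ?case using gdual_represents_YR_Nil by simp
next
  case (Cons t rs)
  interpret recursion_step "length rs" "root_factor t rs" h
    using Cons.prems by (intro recursion_step_root_factor) auto
  show ?case
    using Cons.prems(2) Cons.IH Cons.prems(1) supported_XR is_submodule_XR
    unfolding XR_Cons YR_Cons length_Cons by (intro gdual_represented_Xstep) auto
qed

lemma S_linear_represented_XR:
  "set rs \<subseteq> Shat P g \<Longrightarrow> S_linear (Xs rs) \<phi> \<Longrightarrow> \<exists>y\<in>Ys rs. represents (length rs) (Xs rs) \<phi> y"
proof (induction rs arbitrary: \<phi>)
  case Nil
  then show ?case using S_linear_represented_XR_Nil by simp
next
  case (Cons t rs)
  interpret recursion_step "length rs" "root_factor t rs" h
    using Cons.prems by (intro recursion_step_root_factor) auto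
  show ?case
    using Cons.prems(2) Cons.IH Cons.prems(1) is_submodule_XR
    unfolding XR_Cons YR_Cons length_Cons by (intro S_linear_represented_Xstep) auto
qed

lemma pairing_nondegenerate_XR:
  "set rs \<subseteq> Shat P g \<Longrightarrow> pairing_nondegenerate (length rs) (Xs rs)"
proof (induction rs)
  case Nil
  then show ?case using pairing_nondegenerate_XR_Nil by simp
next
  case (Cons t rs)
  interpret recursion_step "length rs" "root_factor t rs" h
    using Cons.prems by (intro recursion_step_root_factor) auto
  show ?case
    using Cons is_submodule_XR
    unfolding XR_Cons length_Cons by (intro pairing_nondegenerate_Xstep) auto
qed

end

theorem lemma6p8:
  fixes R :: "((int, 'n::{finite,linorder}) vec) set"
    and cor :: "(int, 'n) vec \<Rightarrow> (int, 'n) vec"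
    and P :: "((int, 'n) vec) set"
    and g :: "(int, 'n) vec"
    and s :: "(((int, 'n) vec) \<times> int) list"
  assumes "root_system R cor" and "reduced R" and "irreducible_rs R cor"
    and "is_base R P" and "highest_root R P g"
    and "\<forall>x\<in>affine_roots R. (\<exists>j. (tensT x j :: 't::idom) \<noteq> 0)"
    and "\<exists>u::'t. 2 * u = 1"
    and "set s \<subseteq> Shat P g"
  shows "(Ymod cor s :: (nat list \<Rightarrow> ('n, 't) spoly fract) set) =
           {z. (\<forall>\<sigma>. \<sigma> \<notin> Iset (length s) \<longrightarrow> z \<sigma> = 0) \<and> (\<forall>\<sigma>. z \<sigma> \<in> Qset R) \<and>
               (\<forall>m\<in>Xmod cor s. (\<Sum>\<sigma>\<in>Iset (length s). z \<sigma> * emb (m \<sigma>)) \<in> Sset)}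
       \<and> (\<forall>y\<in>(Ymod cor s :: (nat list \<Rightarrow> ('n, 't) spoly fract) set).
            \<exists>\<phi>\<in>gdual (Xmod cor s). \<forall>x\<in>Xmod cor s.
              emb (\<phi> x) = (\<Sum>\<sigma>\<in>Iset (length s). emb (x \<sigma>) * y \<sigma>))
       \<and> (\<forall>\<phi>\<in>gdual (Xmod cor s :: (nat list \<Rightarrow> ('n, 't) spoly) set).
            \<exists>!y. y \<in> Ymod cor s \<and> (\<forall>x\<in>Xmod cor s.
              emb (\<phi> x) = (\<Sum>\<sigma>\<in>Iset (length s). emb (x \<sigma>) * y \<sigma>)))"
proof -
  obtain h :: "('n, 't) spoly" where "2 * h = 1" using half_in_spoly[OF assms(7)] by blast
  then interpret affine_setting R cor P g h
    using assms(1,4,5,6) by unfold_locales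
  let ?X = "Xmod cor s :: (nat list \<Rightarrow> ('n, 't) spoly) set"
  let ?Y = "Ymod cor s :: (nat list \<Rightarrow> ('n, 't) spoly fract) set"
  have s: "set (rev s) \<subseteq> Shat P g" using assms(8) by simp
  have Y: "?Y = Qdual R (length s) ?X"
    using YR_eq_Qdual[OF s] by (simp add: Xmod_def Ymod_def)
  have "\<exists>!y. y \<in> ?Y \<and> represents (length s) ?X \<phi> y" if \<phi>: "\<phi> \<in> gdual ?X" for \<phi>
  proof -
    obtain y where "y \<in> ?Y" "represents (length s) ?X \<phi> y"
      using S_linear_represented_XR[OF s gdual_S_linear] \<phi> by (auto simp: Xmod_def Ymod_def)
    moreover have "pairing_nondegenerate (length s) ?X"
      using pairing_nondegenerate_XR[OF s] by (simp add: Xmod_def)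
    ultimately show ?thesis using Y represents_unique by (auto simp: Qdual_def)
  qed
  moreover have "\<exists>\<phi>\<in>gdual ?X. represents (length s) ?X \<phi> y" if "y \<in> ?Y" for y
    using gdual_represents_YR[OF s] that by (simp add: Xmod_def Ymod_def)
  ultimately show ?thesis
    unfolding Y by (simp add: Qdual_def supported_def represents_def)
qed
end
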